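(* Let $I$ be an open interval containing $[0,1]$ and let $f:I\to\mathbb{R}$ be twice differentiable on $I$ with bounded second derivative, and suppose $f>2$. Fix $\varepsilon\in\mathbb{R}$ and, for each positive integer $n$ large enough that the points below lie in $I$, let $T_n(f;\varepsilon)$ be the $n\times n$ tridiagonal matrix with diagonal entries \[ f\left(\tfrac{\varepsilon}{n}\right),\ f\left(\tfrac{1+\varepsilon}{n}\right),\ f\left(\tfrac{2+\varepsilon}{n}\right),\ \dots,\ f\left(\tfrac{n-1+\varepsilon}{n}\right) \] (i.e. the $(j,j)$ entry is $f\left(\frac{j-1+\varepsilon}{n}\right)$ for $j=1,\dots,n$), all super- and sub-diagonal entries equal to $-1$, and all other entries $0$. Let \[ G(f)=\exp\left\{\int_0^1 \log\left(\frac{f(x)+\sqrt{f^2(x)-4}}{2}\right)dx\right\}. \] Then \[ \lim_{n\to\infty}\frac{\det T_n(f;\varepsilon)}{G(f)^n}=\frac{\left(f(0)+\sqrt{f^2(0)-4}\right)^{1-\varepsilon}\left(f(1)+\sqrt{f^2(1)-4}\right)^{\varepsilon}}{2\sqrt[4]{(f^2(0)-4)(f^2(1)-4)}}. \] *)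

theory Defs
  imports "HOL-Analysis.Analysis" "Jordan_Normal_Form.Determinant"
begin

definition tridiag_T :: "(real \<Rightarrow> real) \<Rightarrow> real \<Rightarrow> nat \<Rightarrow> real Matrix.mat" where
  "tridiag_T f eps n = Matrix.mat n n (\<lambda>(i, j).
      if i = j then f ((real i + eps) / real n)
      else if i = j + 1 \<or> j = i + 1 then -1 else 0)"

definition G_f :: "(real \<Rightarrow> real) \<Rightarrow> real" where
  "G_f f = exp (integral {0..1} (\<lambda>x. ln ((f x + sqrt ((f x)\<^sup>2 - 4)) / 2)))"

end

theory Submission
  imports Defs
begin

text \<open>Expanding along the last row, the leading minors \<open>D m\<close> of the tridiagonal matrix satisfy
  \<open>D (m + 1) = d m * D m - D (m - 1)\<close>, so \<open>det T\<^sub>n\<close> is the product of the continued-fraction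
  ratios \<open>u 0 = d 0\<close>, \<open>u (k + 1) = d (k + 1) - 1 / u k\<close>. Write \<open>f = \<lambda> + 1/\<lambda>\<close> with
  \<open>\<lambda> = (f + sqrt (f\<^sup>2 - 4)) / 2 > 1\<close> and let \<open>x\<^sub>k = (k + eps) / n\<close>. The ratios stay close to
  \<open>w k = \<lambda> x\<^sub>k * (1 + A k) * (1 + \<beta> x\<^sub>k / n)\<close>, where \<open>1 + A k\<close> is the boundary layer of the
  constant-coefficient recursion at \<open>\<lambda> 0\<close> and \<open>\<beta> = h'\<close>, \<open>h = (ln \<lambda> - ln (sqrt (f\<^sup>2 - 4))) / 2\<close>,
  accounts for the slow variation of \<open>f\<close>: the map \<open>u \<mapsto> d - 1/u\<close> contracts near \<open>\<lambda> > 1\<close> and the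
  residuals of \<open>w\<close> are \<open>O(1/n\<^sup>2 + (k + 1) \<theta>\<^sup>k / n)\<close> with \<open>\<theta> = \<lambda>(0)\<^sup>-\<^sup>2\<close>, so
  \<open>\<Sum>\<^sub>k |ln u k - ln w k| = O(1/n)\<close>. Of the three resulting sums, \<open>\<Sum>\<^sub>k ln \<lambda> x\<^sub>k - n \<integral>\<^sub>0\<^sup>1 ln \<lambda>\<close> tends
  to \<open>(eps - 1/2) (ln \<lambda> 1 - ln \<lambda> 0)\<close> by a second-order Riemann sum estimate, \<open>\<Sum>\<^sub>k ln (1 + A k)\<close>
  telescopes to \<open>ln (1 / (1 - \<theta>))\<close>, and \<open>\<Sum>\<^sub>k ln (1 + \<beta> x\<^sub>k / n)\<close> is a Riemann sum of \<open>\<beta>\<close>, giving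
  \<open>h 1 - h 0\<close>.\<close>

definition tridiag_mat :: "(nat \<Rightarrow> real) \<Rightarrow> nat \<Rightarrow> real Matrix.mat" where
  "tridiag_mat d m = Matrix.mat m m (\<lambda>(i, j).
      if i = j then d i else if i = j + 1 \<or> j = i + 1 then -1 else 0)"

fun continuant :: "(nat \<Rightarrow> real) \<Rightarrow> nat \<Rightarrow> real" where
  "continuant d 0 = 1"
| "continuant d (Suc 0) = d 0"
| "continuant d (Suc (Suc m)) = d (Suc m) * continuant d (Suc m) - continuant d m"

lemma tridiag_mat_carrier[simp]: "tridiag_mat d m \<in> carrier_mat m m" unfolding tridiag_mat_def by auto

lemma det_tridiag_mat: "Determinant.det (tridiag_mat d m) = continuant d m"
proof (induction d m rule: continuant.induct)
  case (1 d) thus ?case using det_dim_zero[of "tridiag_mat d 0"] by simp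
next
  case (2 d)
  have "Determinant.det (tridiag_mat d 1) = (\<Sum>j<1. tridiag_mat d 1 $$ (0,j) * cofactor (tridiag_mat d 1) 0 j)"
    by (rule laplace_expansion_row) auto
  also have "\<dots> = d 0" using det_dim_zero[of "mat_delete (tridiag_mat d 1) 0 0"]
    by (simp add: cofactor_def tridiag_mat_def mat_delete_def)
  finally show ?case by simp
next
  case (3 d m)
  let ?A = "tridiag_mat d (Suc (Suc m))"
  have del1: "mat_delete ?A (Suc m) (Suc m) = tridiag_mat d (Suc m)"
    by (rule eq_matI) (auto simp: tridiag_mat_def mat_delete_def)
  let ?B = "mat_delete ?A (Suc m) m"
  have Bc: "?B \<in> carrier_mat (Suc m) (Suc m)" by (auto simp: mat_delete_def tridiag_mat_def)
  have del2: "mat_delete ?B m m = tridiag_mat d m"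
    by (rule eq_matI) (auto simp: tridiag_mat_def mat_delete_def)
  have "Determinant.det ?B = (\<Sum>i<Suc m. ?B $$ (i, m) * cofactor ?B i m)"
    by (rule laplace_expansion_column[OF Bc]) simp
  also have "\<dots> = ?B $$ (m, m) * cofactor ?B m m"
    by (subst sum.remove[of _ m]) (auto simp: mat_delete_def tridiag_mat_def intro!: sum.neutral)
  also have "\<dots> = - continuant d m" using "3.IH"(2) del2
    by (simp add: cofactor_def mat_delete_def tridiag_mat_def)
  finally have dB: "Determinant.det ?B = - continuant d m" .
  have "Determinant.det ?A = (\<Sum>j<Suc (Suc m). ?A $$ (Suc m, j) * cofactor ?A (Suc m) j)"
    by (rule laplace_expansion_row) auto
  also have "\<dots> = ?A $$ (Suc m, Suc m) * cofactor ?A (Suc m) (Suc m) + ?A $$ (Suc m, m) * cofactor ?A (Suc m) m"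
    by (simp add: tridiag_mat_def)
  also have "\<dots> = d (Suc m) * continuant d (Suc m) - continuant d m"
    using "3.IH"(1) del1 dB by (simp add: cofactor_def tridiag_mat_def)
  finally show ?case by simp
qed

lemma tridiag_T_eq_tridiag_mat: "tridiag_T f eps n = tridiag_mat (\<lambda>i. f ((real i + eps) / real n)) n"
  unfolding tridiag_T_def tridiag_mat_def by simp

fun cf_ratio :: "(nat \<Rightarrow> real) \<Rightarrow> nat \<Rightarrow> real" where
  "cf_ratio d 0 = d 0"
| "cf_ratio d (Suc k) = d (Suc k) - 1 / cf_ratio d k"

lemma cf_ratio_ge:
  assumes mu: "\<mu> \<ge> 1" and d: "\<And>k. k < n \<Longrightarrow> d k \<ge> \<mu> + 1 / \<mu>" and k: "k < n"
  shows "cf_ratio d k \<ge> \<mu>"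
  using k
proof (induction k)
  case 0
  have "1 / \<mu> \<ge> 0" using mu by simp
  thus ?case using d[OF "0"] unfolding cf_ratio.simps by linarith
next
  case (Suc k)
  hence "cf_ratio d k \<ge> \<mu>" by simp
  hence "1 / cf_ratio d k \<le> 1 / \<mu>" using mu by (intro divide_left_mono) auto
  thus ?case using d[OF Suc.prems] by simp
qed

lemma continuant_eq_prod_cf_ratio:
  assumes "\<And>k. k < m \<Longrightarrow> cf_ratio d k \<noteq> 0"
  shows "continuant d m = (\<Prod>k<m. cf_ratio d k)"
  using assms
proof (induction m rule: less_induct)
  case (less m)
  show ?case
  proof (cases m)
    case 0 thus ?thesis by simp
  next
    case (Suc j)
    show ?thesis
    proof (cases j)
      case 0 thus ?thesis using Suc by simp
    next
      case (Suc i)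
      have IH1: "continuant d j = (\<Prod>k<j. cf_ratio d k)" using less Suc \<open>m = Suc j\<close> by simp
      have IH2: "continuant d i = (\<Prod>k<i. cf_ratio d k)" using less Suc \<open>m = Suc j\<close> by simp
      have nz: "cf_ratio d i \<noteq> 0" using less.prems Suc \<open>m = Suc j\<close> by simp
      have "continuant d m = d j * (cf_ratio d i * (\<Prod>k<i. cf_ratio d k)) - (\<Prod>k<i. cf_ratio d k)"
        using IH1 IH2 Suc \<open>m = Suc j\<close> by simp
      also have "\<dots> = (d j - 1 / cf_ratio d i) * cf_ratio d i * (\<Prod>k<i. cf_ratio d k)"
        using nz by (simp add: field_simps)
      also have "\<dots> = (\<Prod>k<m. cf_ratio d k)" using Suc \<open>m = Suc j\<close> by (simp add: mult.assoc)
      finally show ?thesis .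
    qed
  qed
qed

definition bdd_lipschitz_on :: "real set \<Rightarrow> (real \<Rightarrow> real) \<Rightarrow> bool" where
  "bdd_lipschitz_on K F \<longleftrightarrow> (\<exists>M. \<forall>x\<in>K. \<bar>F x\<bar> \<le> M) \<and> (\<exists>L. \<forall>x\<in>K. \<forall>y\<in>K. \<bar>F x - F y\<bar> \<le> L * \<bar>x - y\<bar>)"

lemma bdd_lipschitz_onE:
  assumes "bdd_lipschitz_on K F"
  obtains M L where "\<forall>x\<in>K. \<bar>F x\<bar> \<le> M" "\<forall>x\<in>K. \<forall>y\<in>K. \<bar>F x - F y\<bar> \<le> L * \<bar>x - y\<bar>" "L \<ge> 0" "M \<ge> 0"
proof -
  obtain M L where 1: "\<forall>x\<in>K. \<bar>F x\<bar> \<le> M" "\<forall>x\<in>K. \<forall>y\<in>K. \<bar>F x - F y\<bar> \<le> L * \<bar>x - y\<bar>"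
    using assms unfolding bdd_lipschitz_on_def by blast
  have "\<forall>x\<in>K. \<forall>y\<in>K. \<bar>F x - F y\<bar> \<le> max L 0 * \<bar>x - y\<bar>"
    using 1(2) by (meson abs_ge_zero dual_order.trans max.cobounded1 mult_right_mono)
  moreover have "\<forall>x\<in>K. \<bar>F x\<bar> \<le> max M 0" using 1(1) by (meson max.coboundedI1)
  ultimately show ?thesis using that by fastforce
qed

lemma bdd_lipschitz_on_const: "bdd_lipschitz_on K (\<lambda>x. c)"
  unfolding bdd_lipschitz_on_def by (intro conjI exI[of _ "\<bar>c\<bar>"] exI[of _ 0]) auto

lemma bdd_lipschitz_on_add:
  assumes "bdd_lipschitz_on K F" "bdd_lipschitz_on K G" shows "bdd_lipschitz_on K (\<lambda>x. F x + G x)"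
proof -
  obtain M1 L1 where 1: "\<forall>x\<in>K. \<bar>F x\<bar> \<le> M1" "\<forall>x\<in>K. \<forall>y\<in>K. \<bar>F x - F y\<bar> \<le> L1 * \<bar>x - y\<bar>"
    using assms(1) by (rule bdd_lipschitz_onE)
  obtain M2 L2 where 2: "\<forall>x\<in>K. \<bar>G x\<bar> \<le> M2" "\<forall>x\<in>K. \<forall>y\<in>K. \<bar>G x - G y\<bar> \<le> L2 * \<bar>x - y\<bar>"
    using assms(2) by (rule bdd_lipschitz_onE)
  show ?thesis unfolding bdd_lipschitz_on_def
  proof (intro conjI exI ballI)
    fix x assume "x \<in> K" thus "\<bar>F x + G x\<bar> \<le> M1 + M2" using 1 2
      by (meson abs_triangle_ineq add_mono order_trans)
  next
    fix x y assume "x \<in> K" "y \<in> K"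
    have "\<bar>F x + G x - (F y + G y)\<bar> \<le> \<bar>F x - F y\<bar> + \<bar>G x - G y\<bar>" by linarith
    also have "\<dots> \<le> L1 * \<bar>x - y\<bar> + L2 * \<bar>x - y\<bar>" using 1 2 \<open>x \<in> K\<close> \<open>y \<in> K\<close> by (intro add_mono) auto
    finally show "\<bar>F x + G x - (F y + G y)\<bar> \<le> (L1 + L2) * \<bar>x - y\<bar>" by (simp add: distrib_right)
  qed
qed

lemma bdd_lipschitz_on_minus:
  assumes "bdd_lipschitz_on K F" shows "bdd_lipschitz_on K (\<lambda>x. - F x)"
proof -
  obtain M1 L1 where 1: "\<forall>x\<in>K. \<bar>F x\<bar> \<le> M1" "\<forall>x\<in>K. \<forall>y\<in>K. \<bar>F x - F y\<bar> \<le> L1 * \<bar>x - y\<bar>"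
    using assms(1) by (rule bdd_lipschitz_onE)
  show ?thesis unfolding bdd_lipschitz_on_def
  proof (intro conjI exI ballI)
    fix x assume "x \<in> K" thus "\<bar>- F x\<bar> \<le> M1" using 1 by simp
  next
    fix x y assume "x \<in> K" "y \<in> K"
    thus "\<bar>- F x - - F y\<bar> \<le> L1 * \<bar>x - y\<bar>" using 1 by (simp add: abs_minus_commute)
  qed
qed

lemma bdd_lipschitz_on_mult:
  assumes "bdd_lipschitz_on K F" "bdd_lipschitz_on K G" shows "bdd_lipschitz_on K (\<lambda>x. F x * G x)"
proof -
  obtain M1 L1 where 1: "\<forall>x\<in>K. \<bar>F x\<bar> \<le> M1" "\<forall>x\<in>K. \<forall>y\<in>K. \<bar>F x - F y\<bar> \<le> L1 * \<bar>x - y\<bar>"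
    using assms(1) by (rule bdd_lipschitz_onE)
  obtain M2 L2 where 2: "\<forall>x\<in>K. \<bar>G x\<bar> \<le> M2" "\<forall>x\<in>K. \<forall>y\<in>K. \<bar>G x - G y\<bar> \<le> L2 * \<bar>x - y\<bar>"
    using assms(2) by (rule bdd_lipschitz_onE)
  show ?thesis unfolding bdd_lipschitz_on_def
  proof (intro conjI exI ballI)
    fix x assume "x \<in> K" thus "\<bar>F x * G x\<bar> \<le> M1 * M2" using 1 2
      by (simp add: abs_mult mult_mono')
  next
    fix x y assume xy: "x \<in> K" "y \<in> K"
    have "\<bar>F x * G x - F y * G y\<bar> = \<bar>F x * (G x - G y) + G y * (F x - F y)\<bar>"
      by (simp add: algebra_simps)
    also have "\<dots> \<le> \<bar>F x\<bar> * \<bar>G x - G y\<bar> + \<bar>G y\<bar> * \<bar>F x - F y\<bar>"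
      by (metis abs_mult abs_triangle_ineq)
    also have "\<dots> \<le> M1 * (L2 * \<bar>x - y\<bar>) + M2 * (L1 * \<bar>x - y\<bar>)"
      using xy 1 2 by (intro add_mono mult_mono) auto
    finally show "\<bar>F x * G x - F y * G y\<bar> \<le> (M1 * L2 + M2 * L1) * \<bar>x - y\<bar>"
      by (simp add: algebra_simps)
  qed
qed

lemma bdd_lipschitz_on_inverse:
  assumes "bdd_lipschitz_on K F" "c > 0" "\<And>x. x \<in> K \<Longrightarrow> c \<le> \<bar>F x\<bar>" shows "bdd_lipschitz_on K (\<lambda>x. 1 / F x)"
proof -
  obtain M1 L1 where 1: "\<forall>x\<in>K. \<bar>F x\<bar> \<le> M1" "\<forall>x\<in>K. \<forall>y\<in>K. \<bar>F x - F y\<bar> \<le> L1 * \<bar>x - y\<bar>"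
    using assms(1) by (rule bdd_lipschitz_onE)
  show ?thesis unfolding bdd_lipschitz_on_def
  proof (intro conjI exI ballI)
    fix x assume "x \<in> K" thus "\<bar>1 / F x\<bar> \<le> 1 / c" using assms(2,3)
      by (simp add: frac_le)
  next
    fix x y assume xy: "x \<in> K" "y \<in> K"
    have nz: "F x \<noteq> 0" "F y \<noteq> 0" using assms(2,3) xy by force+
    have "0 \<le> L1 * \<bar>x - y\<bar>" using 1 xy by (meson abs_ge_zero order_trans)
    have "\<bar>1 / F x - 1 / F y\<bar> = \<bar>F y - F x\<bar> / (\<bar>F x\<bar> * \<bar>F y\<bar>)"
      using nz by (simp add: field_simps abs_mult)
    also have "\<dots> \<le> (L1 * \<bar>x - y\<bar>) / (c * c)"
      using xy 1 assms(2,3) \<open>0 \<le> L1 * \<bar>x - y\<bar>\<close> by (intro frac_le mult_mono) (auto simp: abs_minus_commute)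
    finally show "\<bar>1 / F x - 1 / F y\<bar> \<le> (L1 / (c*c)) * \<bar>x - y\<bar>" by simp
  qed
qed

lemma abs_diff_le_by_deriv_bound:
  assumes "\<And>x. x \<in> {a..b} \<Longrightarrow> (F has_real_derivative F' x) (at x within {a..b})"
    and "\<And>x. x \<in> {a..b} \<Longrightarrow> \<bar>F' x\<bar> \<le> D" "x \<in> {a..b}" "y \<in> {a..b}"
  shows "\<bar>F x - F y\<bar> \<le> D * \<bar>x - y\<bar>"
  using field_differentiable_bound[of "{a..b}" F F' D x y] assms by auto

lemma bdd_lipschitz_on_bounded_deriv:
  assumes "\<And>x. x \<in> {a..b} \<Longrightarrow> (F has_real_derivative F' x) (at x within {a..b})"
    and "\<And>x. x \<in> {a..b} \<Longrightarrow> \<bar>F' x\<bar> \<le> D"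
  shows "bdd_lipschitz_on {a..b} F"
  unfolding bdd_lipschitz_on_def
proof (intro conjI exI ballI)
  fix x y assume "x \<in> {a..b}" "y \<in> {a..b}"
  thus "\<bar>F x - F y\<bar> \<le> D * \<bar>x - y\<bar>" using abs_diff_le_by_deriv_bound[OF assms] by blast
next
  fix x assume x: "x \<in> {a..b}"
  hence ab: "a \<in> {a..b}" by auto
  have D0: "0 \<le> D" using assms(2)[OF x] by linarith
  have "\<bar>F x - F a\<bar> \<le> D * \<bar>x - a\<bar>" using abs_diff_le_by_deriv_bound[OF assms x ab] .
  also have "\<dots> \<le> D * (b - a)" using x D0 by (intro mult_left_mono) auto
  finally show "\<bar>F x\<bar> \<le> \<bar>F a\<bar> + D * (b - a)" by linarith
qed

lemma bdd_lipschitz_on_continuous_deriv: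
  assumes "\<And>x. x \<in> {a..b} \<Longrightarrow> (F has_real_derivative F' x) (at x within {a..b})"
    and "continuous_on {a..b} F'"
  shows "bdd_lipschitz_on {a..b} F"
proof -
  have "bounded (F' ` {a..b})"
    using compact_continuous_image[OF assms(2)] compact_imp_bounded by blast
  then obtain D where "\<forall>y\<in>F' ` {a..b}. \<bar>y\<bar> \<le> D" by (auto simp: bounded_iff)
  thus ?thesis using bdd_lipschitz_on_bounded_deriv[OF assms(1)] by blast
qed

lemma taylor_remainder_le:
  assumes "\<And>x. x \<in> {a..b} \<Longrightarrow> (F has_real_derivative F' x) (at x within {a..b})"
    and "\<And>x y. x \<in> {a..b} \<Longrightarrow> y \<in> {a..b} \<Longrightarrow> \<bar>F' x - F' y\<bar> \<le> L * \<bar>x - y\<bar>"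
    and x: "x \<in> {a..b}" and y: "y \<in> {a..b}"
  shows "\<bar>F y - F x - F' x * (y - x)\<bar> \<le> L * (y - x)\<^sup>2"
proof (cases "x = y")
  case True thus ?thesis by simp
next
  case False
  have L0: "L \<ge> 0"
  proof -
    have "0 \<le> L * \<bar>x - y\<bar>" using assms(2)[OF x y] by (meson abs_ge_zero order_trans)
    thus ?thesis using False by (simp add: zero_le_mult_iff)
  qed
  let ?S = "{min x y..max x y}"
  have sub: "?S \<subseteq> {a..b}" using x y by auto
  have der: "((\<lambda>t. F t - F' x * t) has_real_derivative (F' t - F' x)) (at t within ?S)" if "t \<in> ?S" for t
    using sub that
    by (auto intro!: derivative_eq_intros has_field_derivative_subset[OF assms(1)])
  have bd: "\<bar>F' t - F' x\<bar> \<le> L * \<bar>y - x\<bar>" if "t \<in> ?S" for t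
  proof -
    have "\<bar>F' t - F' x\<bar> \<le> L * \<bar>t - x\<bar>" using assms(2) sub that x by blast
    moreover note L0
    moreover have "\<bar>t - x\<bar> \<le> \<bar>y - x\<bar>" using that by auto
    ultimately show ?thesis by (meson mult_left_mono order_trans)
  qed
  have "\<bar>(F y - F' x * y) - (F x - F' x * x)\<bar> \<le> L * \<bar>y - x\<bar> * \<bar>y - x\<bar>"
    using field_differentiable_bound[of ?S "\<lambda>t. F t - F' x * t" "\<lambda>t. F' t - F' x" "L * \<bar>y - x\<bar>" y x]
      der bd by auto
  thus ?thesis by (simp add: power2_eq_square algebra_simps abs_mult_self_eq)
qed

lemma riemann_cell_facts:
  fixes n :: nat and k :: nat and eps r :: real
  assumes n: "n > 0" and k: "k < n" and r: "r = (\<bar>eps\<bar> + 1) / n"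
  shows "{real k / n - r .. real k / n + r} \<subseteq> {-r .. 1 + r}"
    "real k / n \<in> {real k / n - r .. real k / n + r}"
    "real (Suc k) / n \<in> {real k / n - r .. real k / n + r}"
    "(real k + eps) / n \<in> {real k / n - r .. real k / n + r}"
proof -
  have rn: "r \<ge> 1 / n" using r n by (simp add: divide_right_mono)
  have n1: "1 / real n > 0" using n by simp
  have r0: "r \<ge> 0" using r by simp
  have kn: "real k / n \<le> 1 - 1/n" using k n by (simp add: field_simps)
  have k0: "real k / n \<ge> 0" by simp
  have "real k / n + r \<le> 1 + r" "-r \<le> real k / n - r" using kn k0 n1 by linarith+
  thus "{real k / n - r .. real k / n + r} \<subseteq> {-r .. 1 + r}" by (meson atLeastatMost_subset_iff)
  show "real k / n \<in> {real k / n - r .. real k / n + r}" using r0 by auto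
  have "real (Suc k) / n = real k / n + 1 / n" by (simp add: add_divide_distrib)
  thus "real (Suc k) / n \<in> {real k / n - r .. real k / n + r}"
    unfolding atLeastAtMost_iff using rn r0 n1 by linarith
  have h: "\<bar>eps / n\<bar> \<le> r" using r n by (simp add: divide_right_mono)
  have "(real k + eps) / n = real k / n + eps / n" by (simp add: add_divide_distrib)
  thus "(real k + eps) / n \<in> {real k / n - r .. real k / n + r}"
    unfolding atLeastAtMost_iff using abs_le_D1[OF h] abs_le_D2[OF h] by linarith
qed

lemma telescoping_sum_error:
  fixes Phi :: "real \<Rightarrow> real" and D :: "nat \<Rightarrow> real"
  assumes "n > 0" and "\<And>k. k < n \<Longrightarrow> \<bar>Phi (real (Suc k) / n) - Phi (real k / n) - D k\<bar> \<le> e"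
  shows "\<bar>Phi 1 - Phi 0 - (\<Sum>k<n. D k)\<bar> \<le> n * e"
proof -
  have "Phi 1 - Phi 0 = (\<Sum>k<n. Phi (real (Suc k) / n) - Phi (real k / n))"
    using sum_lessThan_telescope[of "\<lambda>k. Phi (real k / n)" n] assms(1) by simp
  hence "\<bar>Phi 1 - Phi 0 - (\<Sum>k<n. D k)\<bar> = \<bar>\<Sum>k<n. Phi (real (Suc k) / n) - Phi (real k / n) - D k\<bar>"
    by (simp add: sum_subtractf)
  also have "\<dots> \<le> (\<Sum>k<n. e)" by (rule order_trans[OF sum_abs sum_mono]) (use assms(2) in auto)
  finally show ?thesis by simp
qed

lemma riemann_sum_error:
  fixes phi Phi :: "real \<Rightarrow> real" and n :: nat and eps a b L :: real
  assumes n: "n > 0" and K: "{-((\<bar>eps\<bar>+1)/n) .. 1 + (\<bar>eps\<bar>+1)/n} \<subseteq> {a..b}"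
    and dPhi: "\<And>x. x \<in> {a..b} \<Longrightarrow> (Phi has_real_derivative phi x) (at x within {a..b})"
    and lip: "\<And>x y. x \<in> {a..b} \<Longrightarrow> y \<in> {a..b} \<Longrightarrow> \<bar>phi x - phi y\<bar> \<le> L * \<bar>x - y\<bar>"
    and L0: "L \<ge> 0"
  shows "\<bar>(\<Sum>k<n. phi ((real k + eps) / n)) / n - (Phi 1 - Phi 0)\<bar> \<le> 2 * L * ((\<bar>eps\<bar>+1)/n)"
proof -
  define r where "r = (\<bar>eps\<bar>+1)/n"
  define c where "c = (\<lambda>k::nat. (real k + eps) / n)"
  have cellb: "\<bar>(Phi (real (Suc k) / n) - Phi (real k / n)) - phi (c k) / n\<bar> \<le> 2 * L * r / n"
    if k: "k < n" for k
  proof -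
    let ?J = "{real k / n - r .. real k / n + r}"
    note cf = riemann_cell_facts[OF n k r_def]
    have JK: "?J \<subseteq> {a..b}" using cf(1) K r_def by blast
    have der: "((\<lambda>t. Phi t - phi (c k) * t) has_real_derivative (phi t - phi (c k))) (at t within ?J)"
      if "t \<in> ?J" for t
      using JK that by (auto intro!: derivative_eq_intros has_field_derivative_subset[OF dPhi])
    have bd: "\<bar>phi t - phi (c k)\<bar> \<le> 2 * L * r" if "t \<in> ?J" for t
    proof -
      have "\<bar>phi t - phi (c k)\<bar> \<le> L * \<bar>t - c k\<bar>" using lip JK that cf(4) c_def by blast
      also have "\<dots> \<le> L * (2 * r)" using that cf(4) c_def L0 by (intro mult_left_mono) auto
      finally show ?thesis by simp
    qed
    define y where "y = real (Suc k) / n"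
    define x where "x = real k / n"
    have e: "y = x + 1 / n" using n unfolding x_def y_def by (simp add: field_simps)
    have "\<bar>(Phi y - phi (c k) * y) - (Phi x - phi (c k) * x)\<bar> \<le> 2 * L * r * \<bar>y - x\<bar>"
      unfolding x_def y_def by (rule abs_diff_le_by_deriv_bound[OF der bd cf(3) cf(2)])
    moreover have "(Phi y - phi (c k) * y) - (Phi x - phi (c k) * x) = (Phi y - Phi x) - phi (c k) / n"
      "\<bar>y - x\<bar> = 1 / n" by (simp_all add: e algebra_simps)
    ultimately show ?thesis unfolding x_def[symmetric] y_def[symmetric] by simp
  qed
  have "\<bar>Phi 1 - Phi 0 - (\<Sum>k<n. phi (c k) / n)\<bar> \<le> n * (2 * L * r / n)"
    by (rule telescoping_sum_error[OF n cellb])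
  thus ?thesis unfolding r_def c_def using n by (simp add: abs_minus_commute sum_divide_distrib)
qed

text \<open>The node \<open>(k + eps) / n\<close> lies \<open>(eps - 1/2) / n\<close> to the right of the midpoint of its cell;
  the first-order effect of this shift is the \<open>phi'\<close>-term.\<close>
lemma riemann_sum_error_second_order:
  fixes phi phi' Phi :: "real \<Rightarrow> real" and n :: nat and eps a b L :: real
  assumes n: "n > 0" and K: "{-((\<bar>eps\<bar>+1)/n) .. 1 + (\<bar>eps\<bar>+1)/n} \<subseteq> {a..b}"
    and dPhi: "\<And>x. x \<in> {a..b} \<Longrightarrow> (Phi has_real_derivative phi x) (at x within {a..b})"
    and dphi: "\<And>x. x \<in> {a..b} \<Longrightarrow> (phi has_real_derivative phi' x) (at x within {a..b})"
    and lip: "\<And>x y. x \<in> {a..b} \<Longrightarrow> y \<in> {a..b} \<Longrightarrow> \<bar>phi' x - phi' y\<bar> \<le> L * \<bar>x - y\<bar>"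
    and L0: "L \<ge> 0"
  shows "\<bar>(\<Sum>k<n. phi ((real k + eps) / n)) - n * (Phi 1 - Phi 0)
          - (eps - 1/2) * ((\<Sum>k<n. phi' ((real k + eps) / n)) / n)\<bar> \<le> 4 * L * ((\<bar>eps\<bar>+1)/n)^2 * n"
proof -
  define r where "r = (\<bar>eps\<bar>+1)/n"
  define c where "c = (\<lambda>k::nat. (real k + eps) / n)"
  have cellb: "\<bar>(Phi (real (Suc k) / n) - Phi (real k / n)) - phi (c k) / n - phi' (c k) * (1 - 2*eps) / (2 * n^2)\<bar> \<le> 4 * L * r^2 / n"
    if k: "k < n" for k
  proof -
    let ?J = "{real k / n - r .. real k / n + r}"
    note cf = riemann_cell_facts[OF n k r_def]
    have JK: "?J \<subseteq> {a..b}" using cf(1) K r_def by blast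
    have ck: "c k \<in> {a..b}" using cf(4) JK c_def by blast
    have der: "((\<lambda>t. Phi t - phi (c k) * t - phi' (c k) * (t - c k)^2 / 2) has_real_derivative
         (phi t - phi (c k) - phi' (c k) * (t - c k))) (at t within ?J)"
      if "t \<in> ?J" for t
      using JK that by (auto intro!: derivative_eq_intros has_field_derivative_subset[OF dPhi] simp: field_simps)
    have bd: "\<bar>phi t - phi (c k) - phi' (c k) * (t - c k)\<bar> \<le> 4 * L * r^2" if "t \<in> ?J" for t
    proof -
      have tK: "t \<in> {a..b}" using JK that by blast
      have "\<bar>phi t - phi (c k) - phi' (c k) * (t - c k)\<bar> \<le> L * (t - c k)^2"
        by (rule taylor_remainder_le[OF dphi lip ck tK])
      also have "\<dots> \<le> L * (2 * r)^2"
      proof -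
        have "\<bar>t - c k\<bar> \<le> 2 * r" using that cf(4) unfolding c_def by auto
        hence "\<bar>t - c k\<bar>^2 \<le> (2 * r)^2" by (intro power_mono) auto
        thus ?thesis using L0 by (intro mult_left_mono) auto
      qed
      finally show ?thesis by (simp add: power2_eq_square)
    qed
    define y where "y = real (Suc k) / n"
    define x where "x = real k / n"
    have e: "y = x + 1 / n" using n unfolding x_def y_def by (simp add: field_simps)
    have "\<bar>(Phi y - phi (c k) * y - phi' (c k) * (y - c k)^2 / 2)
          - (Phi x - phi (c k) * x - phi' (c k) * (x - c k)^2 / 2)\<bar>
       \<le> 4 * L * r^2 * \<bar>y - x\<bar>"
      unfolding x_def y_def by (rule abs_diff_le_by_deriv_bound[OF der bd cf(3) cf(2)])
    moreover have "(y - c k)^2 / 2 - (x - c k)^2 / 2 = (1 - 2*eps) / (2 * n^2)"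
      using n unfolding c_def e x_def by (simp add: field_simps power2_eq_square)
    moreover have "(Phi y - phi (c k) * y - phi' (c k) * (y - c k)^2 / 2)
          - (Phi x - phi (c k) * x - phi' (c k) * (x - c k)^2 / 2)
        = (Phi y - Phi x) - phi (c k) / n - phi' (c k) * ((y - c k)^2 / 2 - (x - c k)^2 / 2)"
      "\<bar>y - x\<bar> = 1 / n" by (simp_all add: e algebra_simps)
    ultimately show ?thesis unfolding x_def[symmetric] y_def[symmetric] by simp
  qed
  define Y where "Y = Phi 1 - Phi 0 - ((\<Sum>k<n. phi (c k)) / n + (1 - 2*eps) / (2 * n^2) * (\<Sum>k<n. phi' (c k)))"
  have "(\<Sum>k<n. phi (c k) / n + phi' (c k) * (1 - 2*eps) / (2 * n^2))
      = (\<Sum>k<n. phi (c k)) / n + (1 - 2*eps) / (2 * n^2) * (\<Sum>k<n. phi' (c k))"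
    by (simp add: sum.distrib sum_divide_distrib sum_distrib_left algebra_simps)
  moreover have "\<bar>Phi 1 - Phi 0 - (\<Sum>k<n. phi (c k) / n + phi' (c k) * (1 - 2*eps) / (2 * n^2))\<bar>
      \<le> n * (4 * L * r^2 / n)"
    by (rule telescoping_sum_error[OF n]) (use cellb in \<open>simp add: algebra_simps\<close>)
  ultimately have "\<bar>Y\<bar> \<le> 4 * L * r^2" unfolding Y_def using n by simp
  have "(\<Sum>k<n. phi (c k)) - n * (Phi 1 - Phi 0) - (eps - 1/2) * ((\<Sum>k<n. phi' (c k)) / n) = - n * Y"
    unfolding Y_def using n by (simp add: field_simps power2_eq_square)
  hence "\<bar>(\<Sum>k<n. phi (c k)) - n * (Phi 1 - Phi 0) - (eps - 1/2) * ((\<Sum>k<n. phi' (c k)) / n)\<bar> = n * \<bar>Y\<bar>"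
    by (simp add: abs_mult)
  also have "\<dots> \<le> n * (4 * L * r^2)" using \<open>\<bar>Y\<bar> \<le> 4 * L * r^2\<close> by (intro mult_left_mono) auto
  finally show ?thesis unfolding r_def c_def by (simp add: algebra_simps)
qed

lemma sum_le_of_contracting_recurrence:
  fixes E R :: "nat \<Rightarrow> real"
  assumes rec: "\<And>k. k < m \<Longrightarrow> E (Suc k) \<le> c * E k + R k"
    and E0: "\<And>k. E k \<ge> 0" and c: "0 \<le> c" "c < 1"
  shows "(\<Sum>k<Suc m. E k) \<le> (E 0 + (\<Sum>k<m. R k)) / (1 - c)"
proof -
  have "(\<Sum>k<Suc m. E k) = E 0 + (\<Sum>k<m. E (Suc k))" by (rule sum.lessThan_Suc_shift)
  also have "\<dots> \<le> E 0 + (\<Sum>k<m. c * E k + R k)" using rec by (intro add_left_mono sum_mono) auto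
  also have "\<dots> = E 0 + c * (\<Sum>k<m. E k) + (\<Sum>k<m. R k)" by (simp add: sum.distrib sum_distrib_left)
  also have "\<dots> \<le> E 0 + c * (\<Sum>k<Suc m. E k) + (\<Sum>k<m. R k)"
    using c E0 by (intro add_mono mult_left_mono) auto
  finally show ?thesis using c by (simp add: field_simps)
qed

text \<open>With \<open>d = \<Lambda> + 1/\<Lambda>\<close> and \<open>\<theta> = \<Lambda>\<^sup>-\<^sup>2\<close>, the recursion \<open>u 0 = d\<close>, \<open>u (k + 1) = d - 1 / u k\<close> is solved
  exactly by \<open>u k = \<Lambda> * (1 + boundary_layer \<theta> k)\<close>.\<close>
definition boundary_layer :: "real \<Rightarrow> nat \<Rightarrow> real" where
  "boundary_layer \<theta> k = \<theta> ^ (Suc k) * (1 - \<theta>) / (1 - \<theta> ^ Suc k)"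

lemma boundary_layer_nonneg: "0 < \<theta> \<Longrightarrow> \<theta> < 1 \<Longrightarrow> boundary_layer \<theta> k \<ge> 0"
  unfolding boundary_layer_def using power_Suc_less_one[of \<theta> k] by simp

lemma boundary_layer_le: assumes "0 < \<theta>" "\<theta> < 1" shows "boundary_layer \<theta> k \<le> \<theta> ^ Suc k"
proof -
  have "\<theta> ^ Suc k \<le> \<theta>" using assms by (simp add: power_le_one mult_left_le)
  hence "(1 - \<theta>) / (1 - \<theta> ^ Suc k) \<le> 1" using power_Suc_less_one[OF assms, of k] by simp
  thus ?thesis unfolding boundary_layer_def using assms
    by (metis mult_left_le times_divide_eq_right zero_less_power less_eq_real_def)
qed

lemma inverse_one_plus_boundary_layer: assumes "0 < \<theta>" "\<theta> < 1"
  shows "1 / (1 + boundary_layer \<theta> k) = 1 - boundary_layer \<theta> (Suc k) / \<theta>"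
proof -
  have a: "1 - \<theta> ^ Suc k > 0" "1 - \<theta> ^ Suc (Suc k) > 0" using power_Suc_less_one[OF assms, of k] power_Suc_less_one[OF assms, of "Suc k"] by auto
  have e: "1 + boundary_layer \<theta> k = (1 - \<theta> ^ Suc (Suc k)) / (1 - \<theta> ^ Suc k)"
    unfolding boundary_layer_def using a by (simp add: field_simps)
  show ?thesis unfolding e boundary_layer_def using a assms by (simp add: field_simps)
qed

lemma prod_one_plus_boundary_layer: assumes "0 < \<theta>" "\<theta> < 1"
  shows "(\<Prod>k<n. 1 + boundary_layer \<theta> k) = (1 - \<theta> ^ Suc n) / (1 - \<theta>)"
proof (induction n)
  case 0 thus ?case using assms by simp
next
  case (Suc n)
  have a: "1 - \<theta> ^ Suc n > 0" using power_Suc_less_one[OF assms] by auto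
  have e: "1 + boundary_layer \<theta> n = (1 - \<theta> ^ Suc (Suc n)) / (1 - \<theta> ^ Suc n)"
    unfolding boundary_layer_def using a by (simp add: field_simps)
  have "1 - \<theta> ^ Suc (Suc n) > 0" using power_Suc_less_one[OF assms, of "Suc n"] by auto
  thus ?case using Suc a assms by (simp add: e)
qed

lemma sum_Suc_mult_power_le: assumes "0 \<le> (\<theta>::real)" "\<theta> < 1"
  shows "(\<Sum>k<n. (real k + 1) * \<theta> ^ k) \<le> 1 / (1 - \<theta>)^2"
proof -
  have cf0: "(1 - \<theta>)^2 * (\<Sum>k<n. (real k + 1) * \<theta> ^ k) = 1 - (real n + 1) * \<theta>^n + real n * \<theta>^(Suc n)" for n
  proof (induction n)
    case 0 thus ?case by simp
  next
    case (Suc n)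
    have "(1 - \<theta>)^2 * (\<Sum>k<Suc n. (real k + 1) * \<theta> ^ k)
        = (1 - \<theta>)^2 * (\<Sum>k<n. (real k + 1) * \<theta> ^ k) + (1 - \<theta>)^2 * ((real n + 1) * \<theta> ^ n)"
      by (simp add: distrib_left)
    also have "\<dots> = 1 - (real n + 1) * \<theta>^n + real n * \<theta>^(Suc n) + (1 - \<theta>)^2 * ((real n + 1) * \<theta> ^ n)"
      using Suc.IH by simp
    also have "\<dots> = 1 - (real (Suc n) + 1) * \<theta>^(Suc n) + real (Suc n) * \<theta>^(Suc (Suc n))"
      by (simp add: algebra_simps power2_eq_square)
    finally show ?case .
  qed
  have nz: "(1 - \<theta>)^2 > 0" using assms by simp
  have cf: "(\<Sum>k<n. (real k + 1) * \<theta> ^ k) = (1 - (real n + 1) * \<theta>^n + real n * \<theta>^(Suc n)) / (1 - \<theta>)^2"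
    using cf0[of n] nz by (simp add: field_simps)
  have "(real n + 1) * \<theta>^n - real n * \<theta>^(Suc n) = \<theta>^n * (1 + real n * (1 - \<theta>))" by (simp add: algebra_simps)
  also have "\<dots> \<ge> 0" using assms by simp
  finally show ?thesis unfolding cf using assms by (intro divide_right_mono) auto
qed

lemma add_inverse_mono: assumes "1 \<le> m" "m \<le> (t::real)" shows "m + 1/m \<le> t + 1/t"
proof -
  have "1 * 1 \<le> t * m" using assms by (intro mult_mono) auto
  hence "0 \<le> (t - m) * (t * m - 1)" using assms by (intro mult_nonneg_nonneg) auto
  hence "0 \<le> ((t - m) * (t * m - 1)) / (t * m)" using assms by simp
  moreover have "((t - m) * (t * m - 1)) / (t * m) = (t + 1/t) - (m + 1/m)" using assms
    by (simp add: field_simps)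
  ultimately show ?thesis by simp
qed

lemma abs_ln_diff_le: assumes "1 \<le> (x::real)" "1 \<le> y" shows "\<bar>ln x - ln y\<bar> \<le> \<bar>x - y\<bar>"
proof -
  have *: "ln u - ln v \<le> u - v" if "1 \<le> v" "v \<le> u" for u v :: real
  proof -
    have "ln u - ln v = ln (u / v)" using that by (simp add: ln_div)
    also have "\<dots> \<le> u / v - 1" using that by (intro ln_le_minus_one) auto
    also have "\<dots> = (u - v) / v" using that by (simp add: field_simps)
    also have "\<dots> \<le> u - v" using that by (simp add: divide_le_eq mult_le_cancel_left1)
    finally show ?thesis .
  qed
  show ?thesis
  proof (cases "y \<le> x")
    case True
    have "ln y \<le> ln x" using True assms by simp
    thus ?thesis using *[OF assms(2) True] True by simp
  next
    case False
    have "ln x \<le> ln y" using False assms by simp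
    thus ?thesis using *[OF assms(1), of y] False by simp
  qed
qed

lemma abs_sub_square_div_le:
  fixes u v c e M :: real
  assumes "\<bar>u - c\<bar> \<le> e" "\<bar>v - c\<bar> \<le> e" "v \<ge> 1/2" "\<bar>c\<bar> \<le> M"
  shows "\<bar>u - c^2 / v\<bar> \<le> (1 + 2 * M) * e"
proof -
  have "u - c^2 / v = (u - c) + c * (v - c) / v"
    using assms(3) by (simp add: field_simps power2_eq_square)
  moreover have "\<bar>c * (v - c) / v\<bar> \<le> M * e / (1/2)"
    unfolding abs_mult abs_divide using assms by (intro frac_le mult_mono) auto
  ultimately show ?thesis using abs_triangle_ineq[of "u - c" "c * (v - c) / v"] assms(1)
    by (simp add: algebra_simps)
qed

lemma abs_sum_ln_one_plus_minus_sum_le: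
  fixes a :: "nat \<Rightarrow> real"
  assumes "\<And>k. k < n \<Longrightarrow> \<bar>a k\<bar> \<le> M" and "M \<le> 1/2"
  shows "\<bar>(\<Sum>k<n. ln (1 + a k)) - (\<Sum>k<n. a k)\<bar> \<le> n * (2 * M^2)"
proof -
  have "\<bar>(\<Sum>k<n. ln (1 + a k)) - (\<Sum>k<n. a k)\<bar> \<le> (\<Sum>k<n. \<bar>ln (1 + a k) - a k\<bar>)"
    unfolding sum_subtractf[symmetric] by (rule sum_abs)
  also have "\<dots> \<le> (\<Sum>k<n. 2 * M^2)"
  proof (rule sum_mono)
    fix k assume "k \<in> {..<n}"
    hence a: "\<bar>a k\<bar> \<le> M" using assms(1) by simp
    have "\<bar>ln (1 + a k) - a k\<bar> \<le> 2 * (a k)^2"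
      using a assms(2) by (intro abs_ln_one_plus_x_minus_x_bound) auto
    also have "\<dots> \<le> 2 * M^2" using a power_mono[of "\<bar>a k\<bar>" M 2] by simp
    finally show "\<bar>ln (1 + a k) - a k\<bar> \<le> 2 * M^2" .
  qed
  finally show ?thesis by simp
qed

lemma LIMSEQ_by_abs_bound:
  fixes a b :: "nat \<Rightarrow> real"
  assumes "\<And>n. n \<ge> N \<Longrightarrow> \<bar>a n - l\<bar> \<le> b n" "b \<longlonglongrightarrow> 0"
  shows "a \<longlonglongrightarrow> l"
proof -
  have "(\<lambda>n. a n - l) \<longlonglongrightarrow> 0"
    by (rule Lim_null_comparison[OF _ assms(2)]) (use assms(1) in \<open>auto simp: eventually_sequentially\<close>)
  thus ?thesis by (simp add: LIM_zero_iff)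
qed

lemma ln_geometric_partial_tendsto: assumes "0 < (q::real)" "q < 1"
  shows "(\<lambda>n. ln ((1 - q ^ Suc n) / (1 - q))) \<longlonglongrightarrow> ln (1 / (1 - q))"
proof -
  have p: "(\<lambda>n. q ^ n) \<longlonglongrightarrow> 0" using assms by (intro LIMSEQ_power_zero) auto
  have p2: "(\<lambda>n. q ^ Suc n) \<longlonglongrightarrow> 0" using LIMSEQ_Suc[OF p] .
  have "(\<lambda>n. (1 - q ^ Suc n) / (1 - q)) \<longlonglongrightarrow> (1 - 0) / (1 - q)"
    using assms by (intro tendsto_intros p2) auto
  hence "(\<lambda>n. ln ((1 - q ^ Suc n) / (1 - q))) \<longlonglongrightarrow> ln ((1 - 0) / (1 - q))"
    using assms by (intro tendsto_ln) auto
  thus ?thesis by simp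
qed

text \<open>The margins \<open>a < 0\<close> and \<open>1 < b\<close> keep the shifted nodes \<open>(k + eps) / n\<close> and the cells
  around them inside \<open>[a, b]\<close> for large \<open>n\<close>.\<close>
locale tridiag_setting =
  fixes f f' f'' :: "real \<Rightarrow> real" and a b B :: real
  assumes a0: "a < 0" and b1: "1 < b"
  and df: "\<And>x. x \<in> {a..b} \<Longrightarrow> (f has_real_derivative f' x) (at x within {a..b})"
  and df': "\<And>x. x \<in> {a..b} \<Longrightarrow> (f' has_real_derivative f'' x) (at x within {a..b})"
  and Bd: "\<And>x. x \<in> {a..b} \<Longrightarrow> \<bar>f'' x\<bar> \<le> B"
  and fgt: "\<And>x. x \<in> {a..b} \<Longrightarrow> f x > 2"
begin

abbreviation "K \<equiv> {a..b}"

definition "s x = sqrt ((f x)^2 - 4)"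
definition "lam x = (f x + s x) / 2"
definition "g x = ln (lam x)"
definition "g' x = f' x * (1 / s x)"
definition "beta x = - (f' x * (1 / lam x) * (1 / s x) * (1 / s x))"
definition "h x = (ln (lam x) - ln (s x)) / 2"
definition "psi x = 1 / lam x"
definition "psi' x = - (f' x * (1 / lam x) * (1 / s x))"

lemma K_ne: "K \<noteq> {}" and zero_K: "0 \<in> K" and one_K: "1 \<in> K"
  using a0 b1 by auto

lemma continuous_on_f: "continuous_on K f" using df by (rule DERIV_continuous_on)
lemma continuous_on_f': "continuous_on K f'" using df' by (rule DERIV_continuous_on)

lemma f_ge_2_plus: obtains c where "c > 0" "\<And>x. x \<in> K \<Longrightarrow> 2 + c \<le> f x"
proof -
  obtain x0 where "x0 \<in> K" "\<forall>x\<in>K. f x0 \<le> f x"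
    using continuous_attains_inf[OF compact_Icc K_ne continuous_on_f] by blast
  thus ?thesis using that[of "f x0 - 2"] fgt by force
qed

lemma s_ge: obtains s0 where "s0 > 0" "\<And>x. x \<in> K \<Longrightarrow> s0 \<le> s x"
proof -
  obtain c where c: "c > 0" "\<And>x. x \<in> K \<Longrightarrow> 2 + c \<le> f x" using f_ge_2_plus by blast
  have "sqrt (4 * c) \<le> s x" if x: "x \<in> K" for x
  proof -
    have "(2 + c)^2 \<le> (f x)^2" using c(2)[OF x] c(1) by (intro power_mono) auto
    moreover have "(2 + c)^2 \<ge> 4 + 4 * c" by (simp add: power2_eq_square algebra_simps)
    ultimately have "4 * c \<le> (f x)^2 - 4" by linarith
    thus ?thesis unfolding s_def by simp
  qed
  moreover have "sqrt (4 * c) > 0" using c by simp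
  ultimately show ?thesis using that[of "sqrt (4 * c)"] by blast
qed

lemma s_pos: "x \<in> K \<Longrightarrow> s x > 0"
  using s_ge by (metis less_le_trans)

lemma f_sq_gt_4: "x \<in> K \<Longrightarrow> (f x)^2 - 4 > 0"
proof -
  assume "x \<in> K"
  hence "2 < f x" by (rule fgt)
  hence "2^2 < (f x)^2" by (intro power_strict_mono) auto
  thus ?thesis by simp
qed

lemma s_sq: "x \<in> K \<Longrightarrow> (s x)^2 = (f x)^2 - 4"
  unfolding s_def using f_sq_gt_4[of x] by simp

lemma lam_pos: "x \<in> K \<Longrightarrow> lam x > 0"
  unfolding lam_def using fgt[of x] s_pos[of x] by simp

lemma lam_inv: "x \<in> K \<Longrightarrow> 1 / lam x = (f x - s x) / 2"
proof -
  assume x: "x \<in> K"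
  have "(f x + s x) * (f x - s x) = 4" using s_sq[OF x] by (simp add: algebra_simps power2_eq_square)
  thus ?thesis unfolding lam_def using lam_pos[OF x] unfolding lam_def
    by (simp add: field_simps)
qed

lemma lam_plus_inv: "x \<in> K \<Longrightarrow> lam x + 1 / lam x = f x"
  using lam_inv[of x] unfolding lam_def by (simp add: field_simps)

lemma lam_minus_inv: "x \<in> K \<Longrightarrow> lam x - 1 / lam x = s x"
  using lam_inv[of x] unfolding lam_def by (simp add: field_simps)

lemma lam_ge: obtains \<mu> where "\<mu> > 1" "\<And>x. x \<in> K \<Longrightarrow> \<mu> \<le> lam x"
proof -
  obtain s0 where s0: "s0 > 0" "\<And>x. x \<in> K \<Longrightarrow> s0 \<le> s x" using s_ge by blast
  have "1 + s0 / 2 \<le> lam x" if "x \<in> K" for x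
    using s0(2)[OF that] fgt[OF that] unfolding lam_def by simp
  moreover have "1 + s0 / 2 > 1" using s0(1) by simp
  ultimately show ?thesis using that[of "1 + s0 / 2"] by blast
qed

lemma s_has_derivative: assumes x: "x \<in> K"
  shows "(s has_real_derivative (f x * f' x * (1 / s x))) (at x within K)"
proof -
  have d1: "((\<lambda>x. (f x)^2 - 4) has_real_derivative 2 * f x * f' x) (at x within K)"
    using x by (auto intro!: derivative_eq_intros df)
  have "((\<lambda>x. sqrt ((f x)^2 - 4)) has_real_derivative (inverse (sqrt ((f x)^2 - 4)) / 2 * (2 * f x * f' x))) (at x within K)"
    by (rule DERIV_chain2[OF DERIV_real_sqrt[OF f_sq_gt_4[OF x]] d1])
  moreover have "inverse (sqrt ((f x)^2 - 4)) / 2 * (2 * f x * f' x) = f x * f' x * (1 / s x)"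
    by (simp add: s_def field_simps)
  ultimately show ?thesis unfolding s_def[abs_def] by simp
qed

lemma continuous_on_s: "continuous_on K s" using s_has_derivative by (rule DERIV_continuous_on)

lemma lam_has_derivative: assumes x: "x \<in> K"
  shows "(lam has_real_derivative (f' x * lam x * (1 / s x))) (at x within K)"
proof -
  have d: "((\<lambda>x. (f x + s x) / 2) has_real_derivative ((f' x + f x * f' x * (1 / s x)) / 2)) (at x within K)"
    using x by (auto intro!: derivative_eq_intros df s_has_derivative)
  have e: "(f' x + f x * f' x * (1 / s x)) / 2 = f' x * lam x * (1 / s x)"
    using s_pos[OF x] unfolding lam_def by (simp add: field_simps)
  have eqf: "(\<lambda>x. (f x + s x) / 2) = lam" by (rule ext) (simp add: lam_def)
  show ?thesis using DERIV_cong[OF d[unfolded eqf] e] .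
qed

lemma g_has_derivative: assumes x: "x \<in> K"
  shows "(g has_real_derivative g' x) (at x within K)"
proof -
  have "((\<lambda>x. ln (lam x)) has_real_derivative (f' x * lam x * (1 / s x)) / lam x) (at x within K)"
    using x lam_pos[OF x] by (auto intro!: derivative_eq_intros lam_has_derivative)
  moreover have "(f' x * lam x * (1 / s x)) / lam x = g' x"
    using lam_pos[OF x] unfolding g'_def by (simp add: field_simps)
  ultimately show ?thesis unfolding g_def[abs_def] by simp
qed

lemma h_has_derivative: assumes x: "x \<in> K"
  shows "(h has_real_derivative beta x) (at x within K)"
proof -
  have "((\<lambda>x. (ln (lam x) - ln (s x)) / 2) has_real_derivative
      ((f' x * lam x * (1 / s x)) / lam x - (f x * f' x * (1 / s x)) / s x) / 2) (at x within K)"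
  proof -
    have d1: "((\<lambda>x. ln (lam x)) has_real_derivative (f' x * lam x * (1 / s x)) / lam x) (at x within K)"
      using x lam_pos[OF x] by (auto intro!: derivative_eq_intros lam_has_derivative)
    have d2: "((\<lambda>x. ln (s x)) has_real_derivative (f x * f' x * (1 / s x)) / s x) (at x within K)"
      using x s_pos[OF x] by (auto intro!: derivative_eq_intros s_has_derivative)
    show ?thesis using DERIV_cdivide[OF DERIV_diff[OF d1 d2], of 2] .
  qed
  moreover have "((f' x * lam x * (1 / s x)) / lam x - (f x * f' x * (1 / s x)) / s x) / 2 = beta x"
  proof -
    have l: "1 / lam x = (f x - s x) / 2" by (rule lam_inv[OF x])
    show ?thesis using lam_pos[OF x] s_pos[OF x] unfolding beta_def l
      by (simp add: field_simps)
  qed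
  ultimately show ?thesis unfolding h_def[abs_def] by simp
qed

lemma psi_has_derivative: assumes x: "x \<in> K"
  shows "(psi has_real_derivative psi' x) (at x within K)"
proof -
  have "((\<lambda>x. 1 / lam x) has_real_derivative - (f' x * lam x * (1 / s x)) / (lam x)^2) (at x within K)"
    using x lam_pos[OF x] by (auto intro!: derivative_eq_intros lam_has_derivative simp: power2_eq_square)
  moreover have "- (f' x * lam x * (1 / s x)) / (lam x)^2 = psi' x"
    using lam_pos[OF x] unfolding psi'_def by (simp add: field_simps power2_eq_square)
  ultimately show ?thesis unfolding psi_def[abs_def] by simp
qed

lemma bdd_lipschitz_on_f: "bdd_lipschitz_on K f" using df continuous_on_f' by (rule bdd_lipschitz_on_continuous_deriv)

lemma bdd_lipschitz_on_f': "bdd_lipschitz_on K f'" using df' Bd by (rule bdd_lipschitz_on_bounded_deriv)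

lemma bdd_lipschitz_on_s: "bdd_lipschitz_on K s"
proof (rule bdd_lipschitz_on_continuous_deriv[OF s_has_derivative])
  show "continuous_on K (\<lambda>x. f x * f' x * (1 / s x))"
    by (intro continuous_intros continuous_on_f continuous_on_f' continuous_on_s) (use s_pos in fastforce)
qed

lemma bdd_lipschitz_on_lam: "bdd_lipschitz_on K lam"
proof -
  have "bdd_lipschitz_on K (\<lambda>x. (f x + s x) * (1/2))" by (intro bdd_lipschitz_on_mult bdd_lipschitz_on_add bdd_lipschitz_on_f bdd_lipschitz_on_s bdd_lipschitz_on_const)
  moreover have "(\<lambda>x. (f x + s x) * (1/2)) = lam" by (auto simp: lam_def[abs_def])
  ultimately show ?thesis by simp
qed

lemma bdd_lipschitz_on_inv_s: "bdd_lipschitz_on K (\<lambda>x. 1 / s x)"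
proof -
  obtain s0 where s0: "s0 > 0" "\<And>x. x \<in> K \<Longrightarrow> s0 \<le> s x" using s_ge by blast
  show ?thesis by (rule bdd_lipschitz_on_inverse[OF bdd_lipschitz_on_s s0(1)]) (use s0 in force)
qed

lemma bdd_lipschitz_on_inv_lam: "bdd_lipschitz_on K (\<lambda>x. 1 / lam x)"
proof -
  obtain m where m: "m > 1" "\<And>x. x \<in> K \<Longrightarrow> m \<le> lam x" using lam_ge by blast
  show ?thesis by (rule bdd_lipschitz_on_inverse[OF bdd_lipschitz_on_lam, of 1]) (use m in force)+
qed

lemma bdd_lipschitz_on_g': "bdd_lipschitz_on K g'"
  unfolding g'_def[abs_def] by (intro bdd_lipschitz_on_mult bdd_lipschitz_on_f' bdd_lipschitz_on_inv_s)

lemma bdd_lipschitz_on_beta: "bdd_lipschitz_on K beta"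
  unfolding beta_def[abs_def] by (intro bdd_lipschitz_on_minus bdd_lipschitz_on_mult bdd_lipschitz_on_f' bdd_lipschitz_on_inv_s bdd_lipschitz_on_inv_lam)

lemma bdd_lipschitz_on_psi': "bdd_lipschitz_on K psi'"
  unfolding psi'_def[abs_def] by (intro bdd_lipschitz_on_minus bdd_lipschitz_on_mult bdd_lipschitz_on_f' bdd_lipschitz_on_inv_s bdd_lipschitz_on_inv_lam)

lemma bdd_lipschitz_on_psibeta: "bdd_lipschitz_on K (\<lambda>x. psi x * beta x)"
  unfolding psi_def by (intro bdd_lipschitz_on_mult bdd_lipschitz_on_beta bdd_lipschitz_on_inv_lam)

lemma lam_beta_minus_psi': "x \<in> K \<Longrightarrow> lam x * beta x - psi' x = psi x * beta x"
proof -
  assume x: "x \<in> K"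
  have "beta x * (lam x - 1 / lam x) = psi' x"
    unfolding lam_minus_inv[OF x] beta_def psi'_def using s_pos[OF x] by (simp add: field_simps)
  thus ?thesis unfolding psi_def by (simp add: algebra_simps)
qed

definition "sup_bound F = (SOME M. M \<ge> 0 \<and> (\<forall>x\<in>K. \<bar>F x\<bar> \<le> M))"
definition "lip_const F = (SOME L. L \<ge> 0 \<and> (\<forall>x\<in>K. \<forall>y\<in>K. \<bar>F x - F y\<bar> \<le> L * \<bar>x - y\<bar>))"
definition "mu = (SOME \<mu>. \<mu> > 1 \<and> (\<forall>x\<in>K. \<mu> \<le> lam x))"

lemma sup_bound: assumes "bdd_lipschitz_on K F" shows "sup_bound F \<ge> 0" "x \<in> K \<Longrightarrow> \<bar>F x\<bar> \<le> sup_bound F"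
proof -
  obtain M L where "\<forall>x\<in>K. \<bar>F x\<bar> \<le> M" "M \<ge> 0" using bdd_lipschitz_onE[OF assms] by metis
  hence "\<exists>M. M \<ge> 0 \<and> (\<forall>x\<in>K. \<bar>F x\<bar> \<le> M)" by blast
  from someI_ex[OF this] show "sup_bound F \<ge> 0" "x \<in> K \<Longrightarrow> \<bar>F x\<bar> \<le> sup_bound F" unfolding sup_bound_def by auto
qed

lemma lip_const: assumes "bdd_lipschitz_on K F" shows "lip_const F \<ge> 0" "x \<in> K \<Longrightarrow> y \<in> K \<Longrightarrow> \<bar>F x - F y\<bar> \<le> lip_const F * \<bar>x - y\<bar>"
proof -
  obtain M L where "\<forall>x\<in>K. \<forall>y\<in>K. \<bar>F x - F y\<bar> \<le> L * \<bar>x - y\<bar>" "L \<ge> 0" using bdd_lipschitz_onE[OF assms] by metis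
  hence "\<exists>L. L \<ge> 0 \<and> (\<forall>x\<in>K. \<forall>y\<in>K. \<bar>F x - F y\<bar> \<le> L * \<bar>x - y\<bar>)" by blast
  from someI_ex[OF this] show "lip_const F \<ge> 0" "x \<in> K \<Longrightarrow> y \<in> K \<Longrightarrow> \<bar>F x - F y\<bar> \<le> lip_const F * \<bar>x - y\<bar>"
    unfolding lip_const_def by auto
qed

lemma mu: "mu > 1" "x \<in> K \<Longrightarrow> mu \<le> lam x"
proof -
  obtain m where "m > 1" "\<And>x. x \<in> K \<Longrightarrow> m \<le> lam x" using lam_ge by blast
  hence "\<exists>\<mu>. \<mu> > 1 \<and> (\<forall>x\<in>K. \<mu> \<le> lam x)" by blast
  from someI_ex[OF this] show "mu > 1" "x \<in> K \<Longrightarrow> mu \<le> lam x" unfolding mu_def by auto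
qed

lemma lam_ge1: "x \<in> K \<Longrightarrow> lam x \<ge> 1" using mu by force

abbreviation "Mb \<equiv> sup_bound beta"
abbreviation "Ml \<equiv> sup_bound lam"
abbreviation "Ll \<equiv> lip_const lam"
abbreviation "Lpp \<equiv> lip_const psi'"
abbreviation "Lpb \<equiv> lip_const (\<lambda>x. psi x * beta x)"
abbreviation "\<Lambda> \<equiv> lam 0"
abbreviation "\<theta> \<equiv> 1 / (lam 0)^2"

lemma theta: "0 < \<theta>" "\<theta> < 1"
proof -
  have "lam 0 > 1" using mu zero_K by force
  hence l: "(lam 0)^2 > 1" by (simp add: one_less_power)
  thus "0 < \<theta>" by auto
  show "\<theta> < 1" using l by (simp add: divide_less_eq)
qed

definition "node eps (n::nat) (k::nat) = (real k + eps) / real n"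
definition "diag eps n k = f (node eps n k)"
definition "approx eps (n::nat) k = lam (node eps n k) * (1 + boundary_layer \<theta> k) * (1 + beta (node eps n k) / real n)"

definition "admissible eps (n::nat) \<longleftrightarrow> n > 0 \<and> (\<bar>eps\<bar> + 1) / real n \<le> min (-a) (b - 1) \<and> Mb / real n \<le> (mu - 1) / (2 * mu)"

lemma eventually_admissible: "\<exists>N. \<forall>n\<ge>N. admissible eps n"
proof -
  define \<delta> where "\<delta> = min (-a) (b - 1)"
  have d: "\<delta> > 0" using a0 b1 unfolding \<delta>_def by simp
  define m where "m = (mu - 1) / (2 * mu)"
  have m: "m > 0" using mu unfolding m_def by simp
  obtain N1 :: nat where N1: "(\<bar>eps\<bar> + 1) / \<delta> < N1" using reals_Archimedean2 by blast
  obtain N2 :: nat where N2: "Mb / m < N2" using reals_Archimedean2 by blast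
  have "admissible eps n" if n: "n \<ge> max 1 (max N1 N2)" for n
  proof -
    have n0: "real n > 0" using n by simp
    have "(\<bar>eps\<bar> + 1) / \<delta> < n" using N1 n by linarith
    hence "\<bar>eps\<bar> + 1 < n * \<delta>" by (simp only: pos_divide_less_eq[OF d])
    hence 1: "(\<bar>eps\<bar> + 1) / n \<le> \<delta>" by (simp only: pos_divide_le_eq[OF n0]) (simp add: mult.commute)
    have "Mb / m < n" using N2 n by linarith
    hence "Mb < n * m" by (simp only: pos_divide_less_eq[OF m])
    hence 2: "Mb / n \<le> m" by (simp only: pos_divide_le_eq[OF n0]) (simp add: mult.commute)
    show ?thesis unfolding admissible_def using 1 2 n \<delta>_def m_def by auto
  qed
  thus ?thesis by blast
qed

lemma Mb_nonneg: "Mb \<ge> 0" by (rule sup_bound[OF bdd_lipschitz_on_beta])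

lemma admissible_facts:
  assumes g: "admissible eps n"
  shows "n > 0" "\<And>k. k < n \<Longrightarrow> node eps n k \<in> K" "{-((\<bar>eps\<bar>+1)/n) .. 1 + (\<bar>eps\<bar>+1)/n} \<subseteq> K"
    "Mb / n \<le> 1 / 2" "Mb / n \<le> (mu - 1) / (2 * mu)"
proof -
  show n: "n > 0" using g unfolding admissible_def by auto
  show sub: "{-((\<bar>eps\<bar>+1)/n) .. 1 + (\<bar>eps\<bar>+1)/n} \<subseteq> K" using g unfolding admissible_def by auto
  show "node eps n k \<in> K" if "k < n" for k
    using riemann_cell_facts(1,4)[OF n that refl] sub unfolding node_def by blast
  show "Mb / n \<le> (mu - 1) / (2 * mu)" using g unfolding admissible_def by auto
  moreover have "(mu - 1) / (2 * mu) \<le> 1 / 2" using mu by (simp add: field_simps)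
  ultimately show "Mb / n \<le> 1 / 2" by linarith
qed

lemma diag_eq: "admissible eps n \<Longrightarrow> k < n \<Longrightarrow> diag eps n k = lam (node eps n k) + 1 / lam (node eps n k)"
  unfolding diag_def using admissible_facts(2) lam_plus_inv by metis

lemma cf_ratio_ge_mu: assumes g: "admissible eps n" and k: "k < n" shows "cf_ratio (diag eps n) k \<ge> mu"
proof (rule cf_ratio_ge[OF _ _ k])
  show "1 \<le> mu" using mu by simp
  fix j assume j: "j < n"
  have x: "node eps n j \<in> K" using admissible_facts(2)[OF g j] .
  show "mu + 1 / mu \<le> diag eps n j" unfolding diag_eq[OF g j]
    by (rule add_inverse_mono) (use mu x in auto)
qed

lemma beta_over_n_small: assumes g: "admissible eps n" and k: "k < n"
  shows "\<bar>beta (node eps n k) / n\<bar> \<le> Mb / n" "\<bar>beta (node eps n k) / n\<bar> \<le> 1/2"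
    "1 + beta (node eps n k) / n \<ge> 1/2" "1 + beta (node eps n k) / n \<ge> 1 - Mb / n"
proof -
  have x: "node eps n k \<in> K" using admissible_facts(2)[OF g k] .
  have n: "real n > 0" using admissible_facts(1)[OF g] by simp
  show 1: "\<bar>beta (node eps n k) / n\<bar> \<le> Mb / n" using sup_bound(2)[OF bdd_lipschitz_on_beta x] n
    by (simp add: divide_right_mono)
  thus 2: "\<bar>beta (node eps n k) / n\<bar> \<le> 1/2" using admissible_facts(4)[OF g] by linarith
  show "1 + beta (node eps n k) / n \<ge> 1/2" using 2 by linarith
  show "1 + beta (node eps n k) / n \<ge> 1 - Mb / n" using 1 by linarith
qed

lemma approx_ge: assumes g: "admissible eps n" and k: "k < n" shows "approx eps n k \<ge> (1 + mu) / 2"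
proof -
  have x: "node eps n k \<in> K" using admissible_facts(2)[OF g k] .
  have A: "1 + boundary_layer \<theta> k \<ge> 1" using boundary_layer_nonneg[OF theta] by simp
  have "Mb / n \<le> 1/2" by (rule admissible_facts(4)[OF g])
  hence p: "1 + beta (node eps n k) / n \<ge> 1 - Mb / n" "1 - Mb / n \<ge> 0"
    using beta_over_n_small(4)[OF g k] by linarith+
  have l: "lam (node eps n k) \<ge> mu" "mu > 1" using mu x by auto
  hence l0: "0 \<le> lam (node eps n k)" "0 \<le> lam (node eps n k) * (1 + boundary_layer \<theta> k)" using A by auto
  have "mu * 1 * (1 - Mb / n) \<le> approx eps n k" unfolding approx_def
    using l l0 A p by (intro mult_mono) auto
  moreover have "mu * (1 - (mu - 1) / (2 * mu)) \<le> mu * (1 - Mb / n)"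
    using admissible_facts(5)[OF g] mu by (intro mult_left_mono) auto
  moreover have "mu * (1 - (mu - 1) / (2 * mu)) = (1 + mu) / 2" using mu by (simp add: field_simps)
  ultimately show ?thesis by linarith
qed

lemma abs_node_le: assumes g: "admissible eps n" shows "\<bar>node eps n k\<bar> \<le> (real k + 1) * (1 + \<bar>eps\<bar>) / n"
proof -
  have n: "real n > 0" using admissible_facts(1)[OF g] by simp
  have "\<bar>real k + eps\<bar> \<le> real k + \<bar>eps\<bar>" by linarith
  also have "\<dots> \<le> (real k + 1) * (1 + \<bar>eps\<bar>)" by (simp add: algebra_simps)
  finally show ?thesis unfolding node_def using n by (simp add: divide_right_mono)
qed

lemma lam_beta_near_lam0: assumes g: "admissible eps n" and k: "k < n"
  shows "\<bar>lam (node eps n k) * (1 + beta (node eps n k) / n) - \<Lambda>\<bar>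
     \<le> (Ll * (1 + \<bar>eps\<bar>) + Ml * Mb) * (real k + 1) / n"
proof -
  have x: "node eps n k \<in> K" using admissible_facts(2)[OF g k] .
  have n: "real n > 0" using admissible_facts(1)[OF g] by simp
  let ?x = "node eps n k"
  have eq: "lam ?x * (1 + beta ?x / n) - \<Lambda> = (lam ?x - \<Lambda>) + lam ?x * (beta ?x / n)"
    by (simp add: algebra_simps)
  have "\<bar>lam ?x * (1 + beta ?x / n) - \<Lambda>\<bar> = \<bar>(lam ?x - \<Lambda>) + lam ?x * (beta ?x / n)\<bar>"
    by (simp only: eq)
  also have "\<dots> \<le> \<bar>lam ?x - \<Lambda>\<bar> + \<bar>lam ?x * (beta ?x / n)\<bar>" by (rule abs_triangle_ineq)
  also have "\<dots> = \<bar>lam ?x - \<Lambda>\<bar> + \<bar>lam ?x\<bar> * \<bar>beta ?x / n\<bar>" by (simp only: abs_mult)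
  also have "\<dots> \<le> Ll * ((real k + 1) * (1 + \<bar>eps\<bar>) / n) + Ml * (Mb / n)"
  proof (intro add_mono mult_mono)
    have "\<bar>lam ?x - lam 0\<bar> \<le> Ll * \<bar>?x - 0\<bar>" by (rule lip_const(2)[OF bdd_lipschitz_on_lam x zero_K])
    also have "\<dots> \<le> Ll * ((real k + 1) * (1 + \<bar>eps\<bar>) / n)"
      using abs_node_le[OF g] lip_const(1)[OF bdd_lipschitz_on_lam] by (intro mult_left_mono) auto
    finally show "\<bar>lam ?x - \<Lambda>\<bar> \<le> Ll * ((real k + 1) * (1 + \<bar>eps\<bar>) / n)" .
    show "\<bar>lam ?x\<bar> \<le> Ml" by (rule sup_bound(2)[OF bdd_lipschitz_on_lam x])
    show "\<bar>beta ?x / n\<bar> \<le> Mb / n" by (rule beta_over_n_small(1)[OF g k])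
  qed (auto simp: sup_bound(1)[OF bdd_lipschitz_on_lam])
  also have "\<dots> \<le> Ll * ((real k + 1) * (1 + \<bar>eps\<bar>) / n) + Ml * (Mb * (real k + 1) / n)"
    using n sup_bound(1)[OF bdd_lipschitz_on_lam] Mb_nonneg
    by (intro add_left_mono mult_left_mono divide_right_mono) (auto simp: mult_le_cancel_left1)
  also have "\<dots> = (Ll * (1 + \<bar>eps\<bar>) + Ml * Mb) * (real k + 1) / n" using n by (simp add: field_simps)
  finally show ?thesis .
qed

definition "residual eps n k = approx eps n (Suc k) - diag eps n (Suc k) + 1 / approx eps n k"

definition "slow_const = Lpb + Lpp + 2 * Mb^2"
definition "boundary_const eps = (1 + 2 * Ml) * (Ll * (1 + \<bar>eps\<bar>) + Ml * Mb)"

lemma slow_residual_le: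
  assumes XK: "X \<in> K" and YK: "Y \<in> K" and n: "n > 0" and XY: "X - Y = 1 / real n"
    and pY2: "1 + beta Y / n \<ge> 1/2"
  shows "\<bar>(psi X * beta X - psi Y * beta Y) / n + (psi Y - psi X + psi' X / n)
          + psi Y * (beta Y)^2 / ((real n)^2 * (1 + beta Y / n))\<bar> \<le> slow_const / (real n)^2"
proof -
  define pY where "pY = 1 + beta Y / n"
  have Tb: "\<bar>psi Y - psi X + psi' X / n\<bar> \<le> Lpp / (real n)^2"
  proof -
    have "\<bar>psi Y - psi X - psi' X * (Y - X)\<bar> \<le> Lpp * (Y - X)^2"
      by (rule taylor_remainder_le[OF psi_has_derivative lip_const(2)[OF bdd_lipschitz_on_psi'] XK YK])
    moreover have "Y - X = - (1 / n)" using XY by simp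
    ultimately show ?thesis by (simp add: power2_eq_square)
  qed
  have Pb: "\<bar>(psi X * beta X - psi Y * beta Y) / n\<bar> \<le> Lpb / (real n)^2"
  proof -
    have "\<bar>psi X * beta X - psi Y * beta Y\<bar> \<le> Lpb / n"
      using lip_const(2)[OF bdd_lipschitz_on_psibeta XK YK] XY n by simp
    hence "\<bar>psi X * beta X - psi Y * beta Y\<bar> / n \<le> (Lpb / n) / n" using n by (intro divide_right_mono) auto
    thus ?thesis by (simp add: power2_eq_square)
  qed
  have Qb: "\<bar>psi Y * (beta Y)^2 / ((real n)^2 * pY)\<bar> \<le> 2 * Mb^2 / (real n)^2"
  proof -
    have ps: "0 < psi Y" "psi Y \<le> 1" unfolding psi_def using lam_ge1[OF YK] by auto
    have "\<bar>beta Y\<bar>^2 \<le> Mb^2" using sup_bound(2)[OF bdd_lipschitz_on_beta YK] by (intro power_mono) auto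
    hence "psi Y * (beta Y)^2 \<le> 1 * Mb^2" using ps by (intro mult_mono) auto
    hence "psi Y * (beta Y)^2 / pY \<le> Mb^2 / (1/2)" using pY2 ps Mb_nonneg unfolding pY_def
      by (intro frac_le) auto
    hence "psi Y * (beta Y)^2 / pY / (real n)^2 \<le> (2 * Mb^2) / (real n)^2" using n
      by (intro divide_right_mono) auto
    moreover have "pY > 0" using pY2 unfolding pY_def by linarith
    hence "psi Y * (beta Y)^2 / ((real n)^2 * pY) \<ge> 0" using ps by auto
    ultimately show ?thesis by (simp add: field_simps)
  qed
  have "\<bar>(psi X * beta X - psi Y * beta Y) / n + (psi Y - psi X + psi' X / n)
          + psi Y * (beta Y)^2 / ((real n)^2 * pY)\<bar> \<le> Lpb / (real n)^2 + Lpp / (real n)^2 + 2 * Mb^2 / (real n)^2"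
    by (rule order_trans[OF abs_triangle_ineq add_mono[OF order_trans[OF abs_triangle_ineq add_mono[OF Pb Tb]] Qb]])
  thus ?thesis unfolding pY_def slow_const_def by (simp add: add_divide_distrib)
qed

lemma residual_eq:
  assumes g: "admissible eps n" and k: "Suc k < n"
    and X: "X = node eps n (Suc k)" and Y: "Y = node eps n k"
  shows "residual eps n k
    = ((psi X * beta X - psi Y * beta Y) / n + (psi Y - psi X + psi' X / n)
        + psi Y * (beta Y)^2 / ((real n)^2 * (1 + beta Y / n)))
      + boundary_layer \<theta> (Suc k) * (lam X * (1 + beta X / n) - \<Lambda>^2 / (lam Y * (1 + beta Y / n)))"
proof -
  have XK: "X \<in> K" and YK: "Y \<in> K" using admissible_facts(2)[OF g] k X Y by auto
  have n: "real n > 0" using admissible_facts(1)[OF g] by simp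
  define lX where "lX = lam X"
  define lY where "lY = lam Y"
  define pX where "pX = 1 + beta X / n"
  define pY where "pY = 1 + beta Y / n"
  define A1 where "A1 = boundary_layer \<theta> (Suc k)"
  have rec: "1 / (1 + boundary_layer \<theta> k) = 1 - A1 * \<Lambda>^2"
    using inverse_one_plus_boundary_layer[OF theta, of k] unfolding A1_def by simp
  have "1 / approx eps n k = (1 / (1 + boundary_layer \<theta> k)) / (lY * pY)"
    unfolding approx_def lY_def Y pY_def by simp
  hence "residual eps n k = lX * (1 + A1) * pX - (lX + 1 / lX) + (1 - A1 * \<Lambda>^2) / (lY * pY)"
    using diag_eq[OF g k] unfolding residual_def rec approx_def lX_def X A1_def pX_def by simp
  also have "\<dots> = ((psi X * beta X - psi Y * beta Y) / n + (psi Y - psi X + psi' X / n)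
        + psi Y * (beta Y)^2 / ((real n)^2 * pY)) + A1 * (lX * pX - \<Lambda>^2 / (lY * pY))"
  proof -
    have pp: "psi' X = lX * beta X - beta X / lX"
      using lam_beta_minus_psi'[OF XK] unfolding psi_def lX_def by (simp add: algebra_simps)
    have bXe: "beta X = (pX - 1) * n" and bYe: "beta Y = (pY - 1) * n"
      unfolding pX_def pY_def using n by simp_all
    have "pY \<ge> 1/2" using beta_over_n_small(3)[OF g, of k] k unfolding pY_def Y by simp
    hence "lX \<noteq> 0" "lY \<noteq> 0" "pY \<noteq> 0" "real n \<noteq> 0"
      using lam_ge1[OF XK] lam_ge1[OF YK] n unfolding lX_def lY_def by auto
    thus ?thesis unfolding pp psi_def lX_def[symmetric] lY_def[symmetric] bXe bYe
      by (simp add: field_simps power2_eq_square)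
  qed
  finally show ?thesis unfolding lX_def lY_def pX_def pY_def A1_def .
qed

lemma approx_residual_le:
  assumes g: "admissible eps n" and k: "Suc k < n"
  shows "\<bar>residual eps n k\<bar> \<le> slow_const / (real n)^2 + boundary_const eps * ((real (Suc k) + 1) * \<theta> ^ Suc k) / n"
proof -
  have kn: "k < n" using k by simp
  define X where "X = node eps n (Suc k)"
  define Y where "Y = node eps n k"
  have XK: "X \<in> K" and YK: "Y \<in> K" using admissible_facts(2)[OF g] k X_def Y_def by auto
  have n: "real n > 0" using admissible_facts(1)[OF g] by simp
  have XY: "X - Y = 1 / n" unfolding X_def Y_def node_def using n by (simp add: field_simps)
  define C where "C = Ll * (1 + \<bar>eps\<bar>) + Ml * Mb"
  have C0: "C \<ge> 0" unfolding C_def using lip_const(1)[OF bdd_lipschitz_on_lam] sup_bound(1)[OF bdd_lipschitz_on_lam] Mb_nonneg by simp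
  have nX: "\<bar>lam X * (1 + beta X / n) - \<Lambda>\<bar> \<le> C * (real (Suc k) + 1) / n"
    using lam_beta_near_lam0[OF g k] unfolding C_def X_def .
  have "\<bar>lam Y * (1 + beta Y / n) - \<Lambda>\<bar> \<le> C * (real k + 1) / n"
    using lam_beta_near_lam0[OF g kn] unfolding C_def Y_def .
  also have "\<dots> \<le> C * (real (Suc k) + 1) / n" using C0 n by (intro divide_right_mono mult_left_mono) auto
  finally have nY: "\<bar>lam Y * (1 + beta Y / n) - \<Lambda>\<bar> \<le> C * (real (Suc k) + 1) / n" .
  have "1 * (1/2) \<le> lam Y * (1 + beta Y / n)"
    using lam_ge1[OF YK] beta_over_n_small(3)[OF g kn] unfolding Y_def by (intro mult_mono) auto
  hence Brb: "\<bar>lam X * (1 + beta X / n) - \<Lambda>^2 / (lam Y * (1 + beta Y / n))\<bar> \<le> (1 + 2 * Ml) * (C * (real (Suc k) + 1) / n)"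
    using abs_sub_square_div_le[OF nX nY] sup_bound(2)[OF bdd_lipschitz_on_lam zero_K] by simp
  have A1: "0 \<le> boundary_layer \<theta> (Suc k)" "boundary_layer \<theta> (Suc k) \<le> \<theta> ^ Suc k"
    using boundary_layer_nonneg[OF theta] boundary_layer_le[OF theta, of "Suc k"] power_decreasing[of "Suc k" "Suc (Suc k)" \<theta>] theta
    by auto
  have R0: "\<bar>(psi X * beta X - psi Y * beta Y) / n + (psi Y - psi X + psi' X / n)
        + psi Y * (beta Y)^2 / ((real n)^2 * (1 + beta Y / n))\<bar> \<le> slow_const / (real n)^2"
    using slow_residual_le[OF XK YK _ XY] beta_over_n_small(3)[OF g kn] n unfolding Y_def by simp
  have "\<bar>boundary_layer \<theta> (Suc k) * (lam X * (1 + beta X / n) - \<Lambda>^2 / (lam Y * (1 + beta Y / n)))\<bar>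
      \<le> \<theta> ^ Suc k * ((1 + 2 * Ml) * (C * (real (Suc k) + 1) / n))"
    unfolding abs_mult abs_of_nonneg[OF A1(1)] using Brb A1 by (intro mult_mono) auto
  hence "\<bar>residual eps n k\<bar> \<le> slow_const / (real n)^2 + \<theta> ^ Suc k * ((1 + 2 * Ml) * (C * (real (Suc k) + 1) / n))"
    unfolding residual_eq[OF g k X_def Y_def] by (rule order_trans[OF abs_triangle_ineq add_mono[OF R0]])
  also have "\<dots> = slow_const / (real n)^2 + boundary_const eps * ((real (Suc k) + 1) * \<theta> ^ Suc k) / n"
    unfolding boundary_const_def C_def by (simp only: times_divide_eq_right times_divide_eq_left mult_ac)
  finally show ?thesis .
qed

lemma approx_error_0_le: assumes g: "admissible eps n"
  shows "\<bar>cf_ratio (diag eps n) 0 - approx eps n 0\<bar> \<le> (2 * Ll * \<bar>eps\<bar> + 2 * Ml * Mb) / n"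
proof -
  have n: "real n > 0" using admissible_facts(1)[OF g] by simp
  have n0: "0 < n" using admissible_facts(1)[OF g] .
  define x where "x = node eps n 0"
  have xK: "x \<in> K" unfolding x_def using admissible_facts(2)[OF g n0] .
  define l where "l = lam x"
  define b where "b = beta x"
  have l1: "l \<ge> 1" unfolding l_def using lam_ge1[OF xK] .
  have L1: "\<Lambda> \<ge> 1" using lam_ge1[OF zero_K] .
  have U0: "cf_ratio (diag eps n) 0 = l + 1 / l" using diag_eq[OF g n0] unfolding l_def x_def by simp
  have w0: "approx eps n 0 = l * (1 + \<theta>) * (1 + b / n)" using theta unfolding approx_def l_def b_def x_def by (simp add: boundary_layer_def)
  have eq: "cf_ratio (diag eps n) 0 - approx eps n 0 = (\<Lambda> - l) * ((\<Lambda> + l) / (l * \<Lambda>^2)) - l * (1 + \<theta>) * (b / n)"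
    unfolding U0 w0 using l1 L1 n by (simp add: field_simps power2_eq_square)
  have f1: "(\<Lambda> + l) / (l * \<Lambda>^2) \<le> 2"
  proof -
    have "(\<Lambda> + l) / (l * \<Lambda>^2) = 1 / (l * \<Lambda>) + 1 / \<Lambda>^2" using l1 L1 by (simp add: field_simps power2_eq_square)
    moreover have "1 * 1 \<le> l * \<Lambda>" using l1 L1 by (intro mult_mono) auto
    hence "1 / (l * \<Lambda>) \<le> 1" by simp
    moreover have "1 / \<Lambda>^2 \<le> 1" using L1 by (simp add: one_le_power)
    ultimately show ?thesis by linarith
  qed
  have f0: "(\<Lambda> + l) / (l * \<Lambda>^2) \<ge> 0" using l1 L1 by simp
  have dl: "\<bar>\<Lambda> - l\<bar> \<le> Ll * \<bar>eps\<bar> / n"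
  proof -
    have "\<bar>lam 0 - lam x\<bar> \<le> Ll * \<bar>0 - x\<bar>" by (rule lip_const(2)[OF bdd_lipschitz_on_lam zero_K xK])
    also have "\<bar>0 - x\<bar> = \<bar>eps\<bar> / n" unfolding x_def node_def using n by simp
    finally show ?thesis unfolding l_def by simp
  qed
  have t1: "\<bar>(\<Lambda> - l) * ((\<Lambda> + l) / (l * \<Lambda>^2))\<bar> \<le> (Ll * \<bar>eps\<bar> / n) * 2"
    unfolding abs_mult using dl f1 f0 by (intro mult_mono) auto
  have t2: "\<bar>l * (1 + \<theta>) * (b / n)\<bar> \<le> Ml * 2 * (Mb / n)"
  proof -
    have "\<bar>l * (1 + \<theta>) * (b / n)\<bar> = \<bar>l\<bar> * \<bar>1 + \<theta>\<bar> * \<bar>b / n\<bar>" by (simp only: abs_mult)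
    also have "\<dots> \<le> Ml * 2 * (Mb / n)"
    proof (intro mult_mono)
      show "\<bar>l\<bar> \<le> Ml" unfolding l_def by (rule sup_bound(2)[OF bdd_lipschitz_on_lam xK])
      show "\<bar>1 + \<theta>\<bar> \<le> 2" using theta by simp
      show "\<bar>b / n\<bar> \<le> Mb / n" unfolding b_def x_def by (rule beta_over_n_small(1)[OF g n0])
    qed (use sup_bound(1)[OF bdd_lipschitz_on_lam] in auto)
    finally show ?thesis .
  qed
  have "\<bar>cf_ratio (diag eps n) 0 - approx eps n 0\<bar> \<le> (Ll * \<bar>eps\<bar> / n) * 2 + Ml * 2 * (Mb / n)"
    unfolding eq by (rule order_trans[OF abs_triangle_ineq4 add_mono[OF t1 t2]])
  also have "\<dots> = (2 * Ll * \<bar>eps\<bar> + 2 * Ml * Mb) / n" using n by (simp add: field_simps)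
  finally show ?thesis .
qed

abbreviation "nu \<equiv> (1 + mu) / 2"

lemma nu: "nu > 1" "nu \<le> mu" using mu by auto

lemma approx_error_Suc_le: assumes g: "admissible eps n" and k: "Suc k < n"
  shows "\<bar>cf_ratio (diag eps n) (Suc k) - approx eps n (Suc k)\<bar>
    \<le> (1 / nu^2) * \<bar>cf_ratio (diag eps n) k - approx eps n k\<bar> + \<bar>residual eps n k\<bar>"
proof -
  have kn: "k < n" using k by simp
  define u where "u = cf_ratio (diag eps n) k"
  define w where "w = approx eps n k"
  have u: "u \<ge> nu" using cf_ratio_ge_mu[OF g kn] nu unfolding u_def by linarith
  have w: "w \<ge> nu" using approx_ge[OF g kn] unfolding w_def by simp
  have pos: "u > 0" "w > 0" using u w nu by auto
  have eq: "cf_ratio (diag eps n) (Suc k) - approx eps n (Suc k)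
     = (u - w) / (u * w) - (approx eps n (Suc k) - diag eps n (Suc k) + 1 / approx eps n k)"
    unfolding u_def[symmetric] w_def[symmetric] cf_ratio.simps(2) using pos by (simp add: field_simps)
  have "\<bar>(u - w) / (u * w)\<bar> = \<bar>u - w\<bar> / (u * w)" using pos by (simp add: abs_divide)
  also have "\<dots> \<le> \<bar>u - w\<bar> / nu^2"
  proof (rule divide_left_mono)
    show "nu^2 \<le> u * w" unfolding power2_eq_square using u w nu by (intro mult_mono) auto
  qed (use pos nu in \<open>auto intro!: mult_pos_pos\<close>)
  finally have "\<bar>(u - w) / (u * w)\<bar> \<le> (1 / nu^2) * \<bar>u - w\<bar>" by simp
  thus ?thesis unfolding eq u_def w_def residual_def
    by (rule order_trans[OF abs_triangle_ineq4 add_mono[OF _ order_refl]])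
qed

lemma sum_residual_le:
  assumes g: "admissible eps n" and m: "n = Suc m"
  shows "(\<Sum>k<m. \<bar>residual eps n k\<bar>) \<le> (slow_const + boundary_const eps / (1 - \<theta>)^2) / n"
proof -
  have n: "real n > 0" using m by simp
  have C0: "slow_const \<ge> 0" unfolding slow_const_def
    using lip_const(1)[OF bdd_lipschitz_on_psibeta] lip_const(1)[OF bdd_lipschitz_on_psi'] by simp
  have C3: "boundary_const eps \<ge> 0" unfolding boundary_const_def
    using lip_const(1)[OF bdd_lipschitz_on_lam] sup_bound(1)[OF bdd_lipschitz_on_lam] Mb_nonneg by simp
  have "(\<Sum>k<m. \<bar>residual eps n k\<bar>)
      \<le> (\<Sum>k<m. slow_const / (real n)^2 + boundary_const eps * ((real (Suc k) + 1) * \<theta> ^ Suc k) / n)"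
    using approx_residual_le[OF g] m by (intro sum_mono) simp
  also have "\<dots> = real m * (slow_const / (real n)^2)
      + boundary_const eps / n * (\<Sum>k<m. (real (Suc k) + 1) * \<theta> ^ Suc k)"
    by (simp add: sum.distrib sum_distrib_left sum_divide_distrib ac_simps)
  also have "\<dots> \<le> real n * (slow_const / (real n)^2) + boundary_const eps / n * (1 / (1 - \<theta>)^2)"
  proof (rule add_mono)
    show "real m * (slow_const / (real n)^2) \<le> real n * (slow_const / (real n)^2)"
      using m C0 by (intro mult_right_mono) auto
    have "(\<Sum>k<m. (real (Suc k) + 1) * \<theta> ^ Suc k) \<le> (\<Sum>k<Suc m. (real k + 1) * \<theta> ^ k)"
      unfolding sum.lessThan_Suc_shift[of "\<lambda>k. (real k + 1) * \<theta> ^ k" m] by simp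
    also have "\<dots> \<le> 1 / (1 - \<theta>)^2" using theta by (intro sum_Suc_mult_power_le) auto
    finally show "boundary_const eps / n * (\<Sum>k<m. (real (Suc k) + 1) * \<theta> ^ Suc k) \<le> boundary_const eps / n * (1 / (1 - \<theta>)^2)"
      using C3 n by (intro mult_left_mono) auto
  qed
  also have "\<dots> = (slow_const + boundary_const eps / (1 - \<theta>)^2) / n"
    using n by (simp add: power2_eq_square add_divide_distrib)
  finally show ?thesis .
qed

definition "approx_error_const eps =
  (2 * Ll * \<bar>eps\<bar> + 2 * Ml * Mb + slow_const + boundary_const eps / (1 - \<theta>)^2) / (1 - 1 / nu^2)"

lemma sum_approx_error_le:
  assumes g: "admissible eps n"
  shows "(\<Sum>k<n. \<bar>cf_ratio (diag eps n) k - approx eps n k\<bar>) \<le> approx_error_const eps / n"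
proof -
  obtain m where m: "n = Suc m" using admissible_facts(1)[OF g] gr0_implies_Suc by blast
  have "1 < nu^2" by (rule one_less_power[OF nu(1)]) simp
  hence c: "0 \<le> 1 / nu^2" "1 / nu^2 < 1" by (auto simp: divide_less_eq)
  have "(\<Sum>k<n. \<bar>cf_ratio (diag eps n) k - approx eps n k\<bar>)
      \<le> (\<bar>cf_ratio (diag eps n) 0 - approx eps n 0\<bar> + (\<Sum>k<m. \<bar>residual eps n k\<bar>)) / (1 - 1 / nu^2)"
    unfolding m by (rule sum_le_of_contracting_recurrence[OF _ _ c]) (use approx_error_Suc_le[OF g] m in auto)
  also have "\<dots> \<le> ((2 * Ll * \<bar>eps\<bar> + 2 * Ml * Mb) / n + (slow_const + boundary_const eps / (1 - \<theta>)^2) / n)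
      / (1 - 1 / nu^2)"
    using approx_error_0_le[OF g] sum_residual_le[OF g m] c by (intro divide_right_mono add_mono) auto
  also have "\<dots> = approx_error_const eps / n"
    unfolding approx_error_const_def by (simp add: add_divide_distrib ac_simps)
  finally show ?thesis .
qed

lemma sum_ln_cf_ratio_approx_error:
  assumes g: "admissible eps n"
  shows "\<bar>(\<Sum>k<n. ln (cf_ratio (diag eps n) k)) - (\<Sum>k<n. ln (approx eps n k))\<bar> \<le> approx_error_const eps / n"
proof -
  have "\<bar>(\<Sum>k<n. ln (cf_ratio (diag eps n) k)) - (\<Sum>k<n. ln (approx eps n k))\<bar>
      \<le> (\<Sum>k<n. \<bar>ln (cf_ratio (diag eps n) k) - ln (approx eps n k)\<bar>)"
    unfolding sum_subtractf[symmetric] by (rule sum_abs)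
  also have "\<dots> \<le> (\<Sum>k<n. \<bar>cf_ratio (diag eps n) k - approx eps n k\<bar>)"
  proof (rule sum_mono, rule abs_ln_diff_le)
    fix k assume "k \<in> {..<n}"
    thus "1 \<le> cf_ratio (diag eps n) k" "1 \<le> approx eps n k"
      using cf_ratio_ge_mu[OF g] approx_ge[OF g] mu by fastforce+
  qed
  also have "\<dots> \<le> approx_error_const eps / n" by (rule sum_approx_error_le[OF g])
  finally show ?thesis .
qed

lemma sum_ln_one_plus_boundary_layer: "(\<Sum>k<n. ln (1 + boundary_layer \<theta> k)) = ln ((1 - \<theta> ^ Suc n) / (1 - \<theta>))"
proof -
  have "(\<Sum>k<n. ln (1 + boundary_layer \<theta> k)) = ln (\<Prod>k<n. 1 + boundary_layer \<theta> k)"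
    using boundary_layer_nonneg[OF theta] by (subst ln_prod) (auto simp: add_nonneg_eq_0_iff)
  also have "\<dots> = ln ((1 - \<theta> ^ Suc n) / (1 - \<theta>))" by (simp add: prod_one_plus_boundary_layer[OF theta])
  finally show ?thesis .
qed

lemma sum_ln_one_plus_boundary_layer_tendsto: "(\<lambda>n. \<Sum>k<n. ln (1 + boundary_layer \<theta> k)) \<longlonglongrightarrow> ln (1 / (1 - \<theta>))"
  unfolding sum_ln_one_plus_boundary_layer using theta by (rule ln_geometric_partial_tendsto)

lemma sum_ln_beta_tendsto: "(\<lambda>n. \<Sum>k<n. ln (1 + beta (node eps n k) / n)) \<longlonglongrightarrow> h 1 - h 0"
proof -
  obtain N where N: "\<And>n. n \<ge> N \<Longrightarrow> admissible eps n" using eventually_admissible by blast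
  define Lb where "Lb = lip_const beta"
  show ?thesis
  proof (rule LIMSEQ_by_abs_bound[of N])
    fix n assume "n \<ge> N"
    hence g: "admissible eps n" by (rule N)
    have n: "real n > 0" using admissible_facts(1)[OF g] by simp
    have "\<bar>(\<Sum>k<n. ln (1 + beta (node eps n k) / n)) - (\<Sum>k<n. beta (node eps n k) / n)\<bar> \<le> n * (2 * (Mb / n)^2)"
      using beta_over_n_small(1)[OF g] admissible_facts(4)[OF g]
      by (intro abs_sum_ln_one_plus_minus_sum_le) auto
    hence A: "\<bar>(\<Sum>k<n. ln (1 + beta (node eps n k) / n)) - (\<Sum>k<n. beta (node eps n k) / n)\<bar> \<le> 2 * Mb^2 / n"
      using n by (simp add: power2_eq_square)
    have B: "\<bar>(\<Sum>k<n. beta (node eps n k) / n) - (h 1 - h 0)\<bar> \<le> 2 * Lb * ((\<bar>eps\<bar>+1)/n)"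
    proof -
      have "\<bar>(\<Sum>k<n. beta ((real k + eps) / n)) / n - (h 1 - h 0)\<bar> \<le> 2 * Lb * ((\<bar>eps\<bar>+1)/n)"
        unfolding Lb_def
        by (rule riemann_sum_error[OF admissible_facts(1)[OF g] admissible_facts(3)[OF g] h_has_derivative lip_const(2)[OF bdd_lipschitz_on_beta] lip_const(1)[OF bdd_lipschitz_on_beta]])
      thus ?thesis unfolding node_def by (simp add: sum_divide_distrib)
    qed
    have "\<bar>(\<Sum>k<n. ln (1 + beta (node eps n k) / n)) - (h 1 - h 0)\<bar> \<le> 2 * Mb^2 / n + 2 * Lb * ((\<bar>eps\<bar>+1)/n)"
      using A B by linarith
    also have "\<dots> = (2 * Mb^2 + 2 * Lb * (\<bar>eps\<bar>+1)) / n" using n by (simp add: field_simps)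
    finally show "\<bar>(\<Sum>k<n. ln (1 + beta (node eps n k) / n)) - (h 1 - h 0)\<bar> \<le> (2 * Mb^2 + 2 * Lb * (\<bar>eps\<bar>+1)) / n" .
  qed (rule lim_const_over_n)
qed

definition "G_int x = integral {a..x} g"

lemma continuous_on_g: "continuous_on K g" using g_has_derivative by (rule DERIV_continuous_on)

lemma G_int_has_derivative: "x \<in> K \<Longrightarrow> (G_int has_real_derivative g x) (at x within K)"
  unfolding G_int_def[abs_def] by (rule integral_has_real_derivative[OF continuous_on_g])

lemma integral_g_eq: "integral {0..1} g = G_int 1 - G_int 0"
proof -
  have "continuous_on {a..1} g" using continuous_on_g by (rule continuous_on_subset) (use b1 in auto)
  hence "g integrable_on {a..1}" by (rule integrable_continuous_interval)
  hence "integral {a..0} g + integral {0..1} g = integral {a..1} g"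
    using a0 by (intro Henstock_Kurzweil_Integration.integral_combine) auto
  thus ?thesis unfolding G_int_def by simp
qed

lemma riemann_sum_g_tendsto: "(\<lambda>n. (\<Sum>k<n. g (node eps n k)) - n * integral {0..1} g) \<longlonglongrightarrow> (eps - 1/2) * (g 1 - g 0)"
proof -
  obtain N where N: "\<And>n. n \<ge> N \<Longrightarrow> admissible eps n" using eventually_admissible by blast
  define Lg where "Lg = lip_const g'"
  show ?thesis
  proof (rule LIMSEQ_by_abs_bound[of N])
    fix n assume "n \<ge> N"
    hence g: "admissible eps n" by (rule N)
    have n: "real n > 0" using admissible_facts(1)[OF g] by simp
    define r where "r = (\<bar>eps\<bar>+1)/n"
    have A: "\<bar>(\<Sum>k<n. g (node eps n k)) - n * integral {0..1} g - (eps - 1/2) * ((\<Sum>k<n. g' (node eps n k)) / n)\<bar>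
       \<le> 4 * Lg * r^2 * n"
      using riemann_sum_error_second_order[OF admissible_facts(1)[OF g] admissible_facts(3)[OF g] G_int_has_derivative g_has_derivative lip_const(2)[OF bdd_lipschitz_on_g'] lip_const(1)[OF bdd_lipschitz_on_g']]
      unfolding integral_g_eq node_def r_def Lg_def .
    have B: "\<bar>(\<Sum>k<n. g' (node eps n k)) / n - (g 1 - g 0)\<bar> \<le> 2 * Lg * r"
      using riemann_sum_error[OF admissible_facts(1)[OF g] admissible_facts(3)[OF g] g_has_derivative lip_const(2)[OF bdd_lipschitz_on_g'] lip_const(1)[OF bdd_lipschitz_on_g']]
      unfolding node_def r_def Lg_def .
    have B': "\<bar>(eps - 1/2) * ((\<Sum>k<n. g' (node eps n k)) / n) - (eps - 1/2) * (g 1 - g 0)\<bar> \<le> \<bar>eps - 1/2\<bar> * (2 * Lg * r)"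
      unfolding right_diff_distrib[symmetric] abs_mult using B by (intro mult_left_mono) auto
    have "\<bar>(\<Sum>k<n. g (node eps n k)) - n * integral {0..1} g - (eps - 1/2) * (g 1 - g 0)\<bar>
       \<le> 4 * Lg * r^2 * n + \<bar>eps - 1/2\<bar> * (2 * Lg * r)"
      using order_trans[OF abs_triangle_ineq add_mono[OF A B']] by simp
    also have "\<dots> = (4 * Lg * (\<bar>eps\<bar>+1)^2 + \<bar>eps - 1/2\<bar> * 2 * Lg * (\<bar>eps\<bar>+1)) / n"
      unfolding r_def using n by (simp add: field_simps power2_eq_square)
    finally show "\<bar>(\<Sum>k<n. g (node eps n k)) - n * integral {0..1} g - (eps - 1/2) * (g 1 - g 0)\<bar>
       \<le> (4 * Lg * (\<bar>eps\<bar>+1)^2 + \<bar>eps - 1/2\<bar> * 2 * Lg * (\<bar>eps\<bar>+1)) / n" .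
  qed (rule lim_const_over_n)
qed

lemma sum_ln_cf_ratio_approx_tendsto: "(\<lambda>n. (\<Sum>k<n. ln (cf_ratio (diag eps n) k)) - (\<Sum>k<n. ln (approx eps n k))) \<longlonglongrightarrow> 0"
proof -
  obtain N where N: "\<And>n. n \<ge> N \<Longrightarrow> admissible eps n" using eventually_admissible by blast
  show ?thesis
    by (rule LIMSEQ_by_abs_bound[of N, OF _ lim_const_over_n[of "approx_error_const eps"]]) (use sum_ln_cf_ratio_approx_error N in auto)
qed

lemma ln_approx: assumes g: "admissible eps n" and k: "k < n"
  shows "ln (approx eps n k) = g (node eps n k) + ln (1 + boundary_layer \<theta> k) + ln (1 + beta (node eps n k) / n)"
proof -
  have x: "node eps n k \<in> K" using admissible_facts(2)[OF g k] .
  have p1: "lam (node eps n k) > 0" using lam_pos[OF x] .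
  have p2: "1 + boundary_layer \<theta> k > 0" using boundary_layer_nonneg[OF theta, of k] by simp
  have p3: "1 + beta (node eps n k) / n > 0" using beta_over_n_small(3)[OF g k] by linarith
  show ?thesis unfolding approx_def g_def using p1 p2 p3 by (simp add: ln_mult)
qed

lemma continuant_diag_eq_exp_sum_ln:
  assumes g: "admissible eps n"
  shows "continuant (diag eps n) n = exp (\<Sum>k<n. ln (cf_ratio (diag eps n) k))"
proof -
  have pos: "cf_ratio (diag eps n) k > 0" if "k < n" for k using cf_ratio_ge_mu[OF g that] mu by simp
  have "continuant (diag eps n) n = (\<Prod>k<n. cf_ratio (diag eps n) k)"
    by (rule continuant_eq_prod_cf_ratio) (use pos in force)
  also have "\<dots> = exp (\<Sum>k<n. ln (cf_ratio (diag eps n) k))"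
    unfolding exp_sum[OF finite_lessThan] using pos by (intro prod.cong) auto
  finally show ?thesis .
qed

lemma det_ratio_tendsto:
  "(\<lambda>n. continuant (diag eps n) n / exp (integral {0..1} g) ^ n)
     \<longlonglongrightarrow> exp (ln (1 / (1 - \<theta>)) + (h 1 - h 0) + (eps - 1/2) * (g 1 - g 0))"
proof -
  define S1 where "S1 n = (\<Sum>k<n. ln (cf_ratio (diag eps n) k)) - (\<Sum>k<n. ln (approx eps n k))" for n
  define S2 where "S2 n = (\<Sum>k<n. ln (1 + boundary_layer \<theta> k))" for n :: nat
  define S3 where "S3 n = (\<Sum>k<n. ln (1 + beta (node eps n k) / n))" for n
  define S4 where "S4 n = (\<Sum>k<n. g (node eps n k)) - n * integral {0..1} g" for n
  have "(\<lambda>n. S1 n + S2 n + S3 n + S4 n) \<longlonglongrightarrow> 0 + ln (1 / (1 - \<theta>)) + (h 1 - h 0) + (eps - 1/2) * (g 1 - g 0)"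
    unfolding S1_def S2_def S3_def S4_def
    by (intro tendsto_add sum_ln_cf_ratio_approx_tendsto sum_ln_one_plus_boundary_layer_tendsto
        sum_ln_beta_tendsto riemann_sum_g_tendsto)
  hence lim: "(\<lambda>n. exp (S1 n + S2 n + S3 n + S4 n)) \<longlonglongrightarrow> exp (ln (1 / (1 - \<theta>)) + (h 1 - h 0) + (eps - 1/2) * (g 1 - g 0))"
    by (intro tendsto_exp) simp
  obtain N where N: "\<And>n. n \<ge> N \<Longrightarrow> admissible eps n" using eventually_admissible by blast
  have ev: "exp (S1 n + S2 n + S3 n + S4 n) = continuant (diag eps n) n / exp (integral {0..1} g) ^ n"
    if "n \<ge> N" for n
  proof -
    have gd: "admissible eps n" using N that .
    have "S1 n + S2 n + S3 n + S4 n = (\<Sum>k<n. ln (cf_ratio (diag eps n) k)) - n * integral {0..1} g"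
      unfolding S1_def S2_def S3_def S4_def by (simp add: ln_approx[OF gd] sum.distrib)
    thus ?thesis unfolding continuant_diag_eq_exp_sum_ln[OF gd] by (simp add: exp_diff exp_of_nat_mult)
  qed
  show ?thesis
    by (rule Lim_transform_eventually[OF lim]) (use ev in \<open>auto simp: eventually_sequentially\<close>)
qed

lemma inverse_one_minus_theta: "1 / (1 - \<theta>) = \<Lambda> / s 0"
proof -
  have l0: "\<Lambda> \<ge> 1" using lam_ge1[OF zero_K] .
  have "\<Lambda>^2 - 1 = \<Lambda> * s 0"
    using lam_minus_inv[OF zero_K] l0 by (simp add: field_simps power2_eq_square)
  moreover have "1 - \<theta> = (\<Lambda>^2 - 1) / \<Lambda>^2" using l0 by (simp add: field_simps)
  ultimately have "1 - \<theta> = s 0 / \<Lambda>" using l0 by (simp add: power2_eq_square)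
  thus ?thesis by simp
qed

lemma limit_value_eq:
  "exp (ln (1 / (1 - \<theta>)) + (h 1 - h 0) + (eps - 1/2) * (g 1 - g 0)) =
   ((f 0 + sqrt ((f 0)\<^sup>2 - 4)) powr (1 - eps) * (f 1 + sqrt ((f 1)\<^sup>2 - 4)) powr eps)
     / (2 * root 4 (((f 0)\<^sup>2 - 4) * ((f 1)\<^sup>2 - 4)))"
proof -
  define l0 where "l0 = lam 0"
  define l1 where "l1 = lam 1"
  define s0 where "s0 = s 0"
  define s1 where "s1 = s 1"
  have l0: "l0 > 0" using lam_pos[OF zero_K] l0_def by auto
  have l1: "l1 > 0" using lam_pos[OF one_K] l1_def by auto
  have s0: "s0 > 0" using s_pos[OF zero_K] s0_def by auto
  have s1: "s1 > 0" using s_pos[OF one_K] s1_def by auto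
  have f0: "f 0 + sqrt ((f 0)\<^sup>2 - 4) = 2 * l0" unfolding l0_def lam_def s_def by simp
  have f1: "f 1 + sqrt ((f 1)\<^sup>2 - 4) = 2 * l1" unfolding l1_def lam_def s_def by simp
  have q0: "(f 0)\<^sup>2 - 4 = s0^2" using s_sq[OF zero_K] s0_def by simp
  have q1: "(f 1)\<^sup>2 - 4 = s1^2" using s_sq[OF one_K] s1_def by simp
  have th: "1 / (1 - \<theta>) = l0 / s0" unfolding l0_def s0_def by (rule inverse_one_minus_theta)
  have hh: "h 1 - h 0 = (ln l1 - ln s1) / 2 - (ln l0 - ln s0) / 2"
    unfolding h_def l0_def l1_def s0_def s1_def ..
  have gg: "g 1 - g 0 = ln l1 - ln l0" unfolding g_def l0_def l1_def ..
  have LHS: "exp (ln (1 / (1 - \<theta>)) + (h 1 - h 0) + (eps - 1/2) * (g 1 - g 0))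
     = exp (ln l0 - ln s0 + ((ln l1 - ln s1) / 2 - (ln l0 - ln s0) / 2) + (eps - 1/2) * (ln l1 - ln l0))"
    unfolding th hh gg using l0 s0 by (simp add: ln_div)
  have r4: "root 4 ((s0^2) * (s1^2)) = exp ((2 * ln s0 + 2 * ln s1) / 4)"
  proof -
    have "root 4 ((s0^2) * (s1^2)) = (s0^2 * s1^2) powr (1 / real 4)"
      by (rule root_powr_inverse) (use s0 s1 in auto)
    also have "\<dots> = exp ((1/4) * ln (s0^2 * s1^2))" using s0 s1 by (simp add: powr_def)
    also have "ln (s0^2 * s1^2) = 2 * ln s0 + 2 * ln s1" using s0 s1 by (simp add: ln_mult ln_realpow)
    finally show ?thesis by simp
  qed
  have RHS: "((f 0 + sqrt ((f 0)\<^sup>2 - 4)) powr (1 - eps) * (f 1 + sqrt ((f 1)\<^sup>2 - 4)) powr eps)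
     / (2 * root 4 (((f 0)\<^sup>2 - 4) * ((f 1)\<^sup>2 - 4)))
     = exp ((1 - eps) * (ln 2 + ln l0) + eps * (ln 2 + ln l1) - ln 2 - (2 * ln s0 + 2 * ln s1) / 4)"
  proof -
    have "(2 * l0) powr (1 - eps) = exp ((1 - eps) * (ln 2 + ln l0))" using l0 by (simp add: powr_def ln_mult)
    moreover have "(2 * l1) powr eps = exp (eps * (ln 2 + ln l1))" using l1 by (simp add: powr_def ln_mult)
    ultimately have "((2 * l0) powr (1 - eps) * (2 * l1) powr eps) / (2 * exp ((2 * ln s0 + 2 * ln s1) / 4))
       = exp ((1 - eps) * (ln 2 + ln l0)) * exp (eps * (ln 2 + ln l1)) / (2 * exp ((2 * ln s0 + 2 * ln s1) / 4))"
      by simp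
    also have "\<dots> = exp ((1 - eps) * (ln 2 + ln l0) + eps * (ln 2 + ln l1) - ln 2 - (2 * ln s0 + 2 * ln s1) / 4)"
      by (simp add: exp_diff exp_add)
    finally show ?thesis unfolding f0 f1 unfolding q0 q1 r4 .
  qed
  show ?thesis unfolding LHS RHS by (rule arg_cong[where f=exp]) (simp add: field_simps)
qed

lemma det_tridiag_T_eq: "Determinant.det (tridiag_T f eps n) = continuant (diag eps n) n"
proof -
  have "diag eps n = (\<lambda>i. f ((real i + eps) / real n))" by (auto simp: diag_def node_def)
  thus ?thesis by (simp add: tridiag_T_eq_tridiag_mat det_tridiag_mat)
qed

lemma G_f_eq: "G_f f = exp (integral {0..1} g)"
proof -
  have "(\<lambda>x. ln ((f x + sqrt ((f x)\<^sup>2 - 4)) / 2)) = g" by (auto simp: g_def lam_def s_def)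
  thus ?thesis unfolding G_f_def by simp
qed

theorem det_tridiag_T_tendsto:
  "(\<lambda>n. Determinant.det (tridiag_T f eps n) / (G_f f) ^ n) \<longlonglongrightarrow>
     ((f 0 + sqrt ((f 0)\<^sup>2 - 4)) powr (1 - eps) * (f 1 + sqrt ((f 1)\<^sup>2 - 4)) powr eps)
     / (2 * root 4 (((f 0)\<^sup>2 - 4) * ((f 1)\<^sup>2 - 4)))"
  unfolding det_tridiag_T_eq G_f_eq limit_value_eq[symmetric] by (rule det_ratio_tendsto)

end

lemma tridiag_setting_within_open_interval:
  fixes I :: "real set"
  assumes "open I" "is_interval I" "{0..1} \<subseteq> I"
    and f_deriv: "\<And>x. x \<in> I \<Longrightarrow> (f has_real_derivative f' x) (at x)"
    and f'_deriv: "\<And>x. x \<in> I \<Longrightarrow> (f' has_real_derivative f'' x) (at x)"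
    and B: "\<forall>x\<in>I. \<bar>f'' x\<bar> \<le> B"
    and f_gt: "\<And>x. x \<in> I \<Longrightarrow> f x > 2"
  obtains a b where "tridiag_setting f f' f'' a b B"
proof -
  have "0 \<in> I" "1 \<in> I" using assms(3) by auto
  then obtain e0 e1 where e0: "e0 > 0" "ball 0 e0 \<subseteq> I" and e1: "e1 > 0" "ball 1 e1 \<subseteq> I"
    using open_contains_ball_eq[OF assms(1)] by meson
  define a :: real where "a = - e0 / 2"
  define b :: real where "b = 1 + e1 / 2"
  have aI: "a \<in> I" using e0 unfolding a_def by (auto simp: dist_real_def intro!: subsetD[OF e0(2)])
  have bI: "b \<in> I" using e1 unfolding b_def by (auto simp: dist_real_def intro!: subsetD[OF e1(2)])
  have abI: "{a..b} \<subseteq> I" using mem_is_interval_1_I[OF assms(2) aI bI] by auto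
  have "tridiag_setting f f' f'' a b B"
  proof
    show "a < 0" "1 < b" using e0 e1 unfolding a_def b_def by simp_all
    show "(f has_real_derivative f' x) (at x within {a..b})"
      "(f' has_real_derivative f'' x) (at x within {a..b})" if "x \<in> {a..b}" for x
      using f_deriv f'_deriv abI that by (blast intro: has_field_derivative_at_within)+
    show "\<bar>f'' x\<bar> \<le> B" "f x > 2" if "x \<in> {a..b}" for x using B f_gt abI that by blast+
  qed
  thus ?thesis by (rule that)
qed

theorem theorem1p2:
  fixes I :: "real set" and f f' f'' :: "real \<Rightarrow> real" and eps :: real
  assumes I_open: "open I" and I_interval: "is_interval I" and I_cont: "{0..1} \<subseteq> I"
    and f_deriv: "\<And>x. x \<in> I \<Longrightarrow> (f has_real_derivative f' x) (at x)"
    and f'_deriv: "\<And>x. x \<in> I \<Longrightarrow> (f' has_real_derivative f'' x) (at x)"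
    and f''_bounded: "\<exists>B. \<forall>x\<in>I. \<bar>f'' x\<bar> \<le> B"
    and f_gt: "\<And>x. x \<in> I \<Longrightarrow> f x > 2"
  shows "(\<lambda>n. Determinant.det (tridiag_T f eps n) / (G_f f) ^ n) \<longlonglongrightarrow>
     ((f 0 + sqrt ((f 0)\<^sup>2 - 4)) powr (1 - eps) * (f 1 + sqrt ((f 1)\<^sup>2 - 4)) powr eps)
     / (2 * root 4 (((f 0)\<^sup>2 - 4) * ((f 1)\<^sup>2 - 4)))"
proof -
  obtain B where "\<forall>x\<in>I. \<bar>f'' x\<bar> \<le> B" using f''_bounded by blast
  then obtain a b where "tridiag_setting f f' f'' a b B"
    using tridiag_setting_within_open_interval[OF I_open I_interval I_cont f_deriv f'_deriv _ f_gt]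
    by blast
  then interpret tridiag_setting f f' f'' a b B .
  show ?thesis by (rule det_tridiag_T_tendsto)
qed

end
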